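(* Let $T$ be a nonempty rooted tree, $G=U(T)$ its underlying graph, and $U\colon X^T\to X^G$ the simplicial map sending $(F;L_0\supseteq\cdots\supseteq L_n)$ to $(U(F);L_0\setminus L_1,\dots,L_{n-1}\setminus L_n)$. Then: (1) if $T$ is labelled, $U$ is CULF if and only if $T$ has exactly one vertex; (2) if $T$ is unlabelled (planar or non-planar), $U$ is CULF if and only if $T$ has at most one edge.
   Context: Rooted trees and $X^T$: A rooted tree $T$ is a finite tree with a distinguished root vertex; its vertex set is partially ordered by $v\le w$ iff $v$ lies on the path from the root to $w$; a planar rooted tree additionally carries a total order on the upward edges at each vertex. A rooted forest is a disjoint union of rooted trees. For a vertex subset $S$, the subforest spanned by $S$ ($H|_S$) has vertex set $S$, the edges with both endpoints in $S$, and the induced structure. A subset $L$ defines a lower subforest if $w\in L$, $v\le w$ imply $v\in L$. For $n\ge1$ a layering of $n-1$ cuts of a forest $F$ is a chain $V(F)=L_0\supseteq\cdots\supseteq L_n=\varnothing$ of subsets each defining a lower subforest. An admissible subforest of $T$ is the subforest spanned by $L_i\setminus L_j$ ($i\le j$) for a layering of $T$. $X^T_0$ is a point; $X^T_n$ ($n\ge1$) is the set of pairs $(H;L_0\supseteq\cdots\supseteq L_n)$ with $H$ admissible and $L_\bullet$ a layering of $H$; for $n\ge2$, $d_0(H;L_\bullet)=(H|_{L_1};L_1\supseteq\cdots\supseteq L_n)$, $d_n(H;L_\bullet)=(H|_{L_0\setminus L_{n-1}};L_0\setminus L_{n-1}\supseteq\cdots\supseteq L_{n-1}\setminus L_{n-1})$,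 $d_i$ ($0<i<n$) deletes $L_i$, and $s_i$ repeats $L_i$. In the labelled version vertices are distinguishable; in the unlabelled versions one takes isomorphism classes of such pairs under isomorphisms of rooted forests (planar-structure preserving in the planar case) carrying each $L_i$ onto $L'_i$. Graphs and $X^G$: For a finite graph $G$, a subgraph is a vertex subset with a set of edges having endpoints in it. $X^G_0=\{\varnothing\}$; $X^G_1$ is the set of subgraphs of $G$; $X^G_n$ ($n\ge1$) is the set of tuples $(H;S_1,\dots,S_n)$ with $H$ a subgraph and $S_1,\dots,S_n$ a partition of $V(H)$ into possibly empty disjoint sets; $d_0$ and $d_n$ delete $S_1$, resp. $S_n$, together with these vertices and incident edges from $H$; $d_i$ ($1\le i\le n-1$) merges $S_i$ and $S_{i+1}$; $s_i$ inserts $\varnothing$ after $S_i$. For unlabelled $G$ one takes isomorphism classes of tuples under graph isomorphisms preserving the parts. A map of simplicial sets $f\colon X\to Y$ is CULF (conservative with unique lifting of factorizations) if for all $n$ the commutative squares formed by $f_n,f_{n+1}$ and the degeneracies $s_j\colon X_n\to X_{n+1}$, $s_j\colon Y_n\to Y_{n+1}$ ($0\le j\le n$), and those formed by $f_n,f_{n-1}$ and the inner faces $d_i$ ($0<i<n$), are pullbacks of sets. *)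

theory Defs
  imports Main
begin

text \<open>A commutative square of sets
   A --g--> B
   |h       |k
   C --l--> D
 is a pullback iff it commutes and A maps bijectively onto the set-theoretic
 fibre product of B and C over D.\<close>
definition pullback_sq ::
  "'a set \<Rightarrow> 'b set \<Rightarrow> 'c set \<Rightarrow> ('a \<Rightarrow> 'b) \<Rightarrow> ('a \<Rightarrow> 'c) \<Rightarrow> ('b \<Rightarrow> 'd) \<Rightarrow> ('c \<Rightarrow> 'd) \<Rightarrow> bool"
  where "pullback_sq A B C g h k l \<longleftrightarrow>
     g ` A \<subseteq> B \<and> h ` A \<subseteq> C \<and> (\<forall>a\<in>A. k (g a) = l (h a)) \<and>
     (\<forall>b\<in>B. \<forall>c\<in>C. k b = l c \<longrightarrow> (\<exists>!a. a \<in> A \<and> g a = b \<and> h a = c))"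

text \<open>Simplicial data: levels X n, faces d n i : X n -> X (n-1),
 degeneracies s n j : X n -> X (n+1); a map f with components f n.
 CULF: degeneracy squares and inner-face squares are pullbacks.\<close>
definition culf ::
  "(nat \<Rightarrow> 'a set) \<Rightarrow> (nat \<Rightarrow> nat \<Rightarrow> 'a \<Rightarrow> 'a) \<Rightarrow> (nat \<Rightarrow> nat \<Rightarrow> 'a \<Rightarrow> 'a) \<Rightarrow>
   (nat \<Rightarrow> 'b set) \<Rightarrow> (nat \<Rightarrow> nat \<Rightarrow> 'b \<Rightarrow> 'b) \<Rightarrow> (nat \<Rightarrow> nat \<Rightarrow> 'b \<Rightarrow> 'b) \<Rightarrow>
   (nat \<Rightarrow> 'a \<Rightarrow> 'b) \<Rightarrow> bool"
  where "culf X dX sX Y dY sY f \<longleftrightarrow>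
     (\<forall>n j. j \<le> n \<longrightarrow>
        pullback_sq (X n) (X (Suc n)) (Y n) (sX n j) (f n) (f (Suc n)) (sY n j)) \<and>
     (\<forall>n i. 0 < i \<and> i < n \<longrightarrow>
        pullback_sq (X n) (X (n - 1)) (Y n) (dX n i) (f n) (f (n - 1)) (dY n i))"

definition qclass :: "'a set \<Rightarrow> ('a \<Rightarrow> 'a \<Rightarrow> bool) \<Rightarrow> 'a \<Rightarrow> 'a set"
  where "qclass A R x = {y \<in> A. R x y}"

definition qrep :: "'a set \<Rightarrow> 'a" where "qrep C = (SOME x. x \<in> C)"

definition qlevels :: "(nat \<Rightarrow> 'a set) \<Rightarrow> (nat \<Rightarrow> 'a \<Rightarrow> 'a \<Rightarrow> bool) \<Rightarrow> nat \<Rightarrow> 'a set set"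
  where "qlevels X R n = qclass (X n) (R n) ` X n"

definition qface ::
  "(nat \<Rightarrow> 'a set) \<Rightarrow> (nat \<Rightarrow> 'a \<Rightarrow> 'a \<Rightarrow> bool) \<Rightarrow> (nat \<Rightarrow> nat \<Rightarrow> 'a \<Rightarrow> 'a) \<Rightarrow> nat \<Rightarrow> nat \<Rightarrow> 'a set \<Rightarrow> 'a set"
  where "qface X R d n i C = qclass (X (n - 1)) (R (n - 1)) (d n i (qrep C))"

definition qdegen ::
  "(nat \<Rightarrow> 'a set) \<Rightarrow> (nat \<Rightarrow> 'a \<Rightarrow> 'a \<Rightarrow> bool) \<Rightarrow> (nat \<Rightarrow> nat \<Rightarrow> 'a \<Rightarrow> 'a) \<Rightarrow> nat \<Rightarrow> nat \<Rightarrow> 'a set \<Rightarrow> 'a set"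
  where "qdegen X R s n j C = qclass (X (Suc n)) (R (Suc n)) (s n j (qrep C))"

definition qmap ::
  "(nat \<Rightarrow> 'b set) \<Rightarrow> (nat \<Rightarrow> 'b \<Rightarrow> 'b \<Rightarrow> bool) \<Rightarrow> (nat \<Rightarrow> 'a \<Rightarrow> 'b) \<Rightarrow> nat \<Rightarrow> 'a set \<Rightarrow> 'b set"
  where "qmap Y RY f n C = qclass (Y n) (RY n) (f n (qrep C))"

text \<open>A rooted tree: finite vertex set V, root r, set E of directed edges
 (parent, child).\<close>
definition rooted_tree :: "'v set \<Rightarrow> 'v \<Rightarrow> ('v \<times> 'v) set \<Rightarrow> bool"
  where "rooted_tree V r E \<longleftrightarrow> finite V \<and> r \<in> V \<and> E \<subseteq> V \<times> V \<and>
     (\<forall>p. (p, r) \<notin> E) \<and> (\<forall>c \<in> V - {r}. \<exists>!p. (p, c) \<in> E) \<and>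
     (\<forall>v \<in> V. (r, v) \<in> E\<^sup>*)"

definition planar_structure :: "'v set \<Rightarrow> ('v \<times> 'v) set \<Rightarrow> ('v \<Rightarrow> 'v \<Rightarrow> bool) \<Rightarrow> bool"
  where "planar_structure V E P \<longleftrightarrow> (\<forall>p \<in> V.
     (\<forall>a. (p, a) \<in> E \<longrightarrow> \<not> P a a) \<and>
     (\<forall>a b c. (p, a) \<in> E \<and> (p, b) \<in> E \<and> (p, c) \<in> E \<and> P a b \<and> P b c \<longrightarrow> P a c) \<and>
     (\<forall>a b. (p, a) \<in> E \<and> (p, b) \<in> E \<and> a \<noteq> b \<longrightarrow> P a b \<or> P b a))"

text \<open>Subforest spanned by S: vertices S, edges E \<inter> S \<times> S; its order is
 reachability along these edges. L defines a lower subforest of it.\<close>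
definition lower :: "('v \<times> 'v) set \<Rightarrow> 'v set \<Rightarrow> 'v set \<Rightarrow> bool"
  where "lower E S L \<longleftrightarrow> L \<subseteq> S \<and>
     (\<forall>w \<in> L. \<forall>v. (v, w) \<in> (E \<inter> S \<times> S)\<^sup>* \<longrightarrow> v \<in> L)"

text \<open>A layering L_0 \<supseteq> ... \<supseteq> L_n of the subforest spanned by S, as a list
 of length n+1.\<close>
definition layering :: "('v \<times> 'v) set \<Rightarrow> 'v set \<Rightarrow> 'v set list \<Rightarrow> bool"
  where "layering E S Ls \<longleftrightarrow> Ls \<noteq> [] \<and> hd Ls = S \<and> last Ls = {} \<and>
     (\<forall>k. Suc k < length Ls \<longrightarrow> Ls ! Suc k \<subseteq> Ls ! k) \<and>
     (\<forall>k < length Ls. lower E S (Ls ! k))"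

definition admissible :: "'v set \<Rightarrow> ('v \<times> 'v) set \<Rightarrow> 'v set \<Rightarrow> bool"
  where "admissible V E A \<longleftrightarrow> (\<exists>Ls i j. 2 \<le> length Ls \<and> layering E V Ls \<and>
     i \<le> j \<and> j < length Ls \<and> A = Ls ! i - Ls ! j)"

text \<open>Labelled X^T: the level n consists of layerings (lists of length n+1)
 of admissible subforests; the subforest H is determined by its vertex set
 L_0. Level 0 is the single point [{}].\<close>
definition XT :: "'v set \<Rightarrow> ('v \<times> 'v) set \<Rightarrow> nat \<Rightarrow> 'v set list set"
  where "XT V E n = {Ls. length Ls = Suc n \<and> admissible V E (hd Ls) \<and> layering E (hd Ls) Ls}"

definition T_face :: "nat \<Rightarrow> nat \<Rightarrow> 'v set list \<Rightarrow> 'v set list"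
  where "T_face n i Ls = take i Ls @ drop (Suc i) Ls"

definition T_degen :: "nat \<Rightarrow> nat \<Rightarrow> 'v set list \<Rightarrow> 'v set list"
  where "T_degen n j Ls = take (Suc j) Ls @ drop j Ls"

definition isoT :: "bool \<Rightarrow> ('v \<Rightarrow> 'v \<Rightarrow> bool) \<Rightarrow> ('v \<times> 'v) set \<Rightarrow> nat \<Rightarrow> 'v set list \<Rightarrow> 'v set list \<Rightarrow> bool"
  where "isoT pl P E n Ls Ls' \<longleftrightarrow> length Ls = length Ls' \<and>
     (\<exists>\<phi>. bij_betw \<phi> (hd Ls) (hd Ls') \<and>
        (\<forall>a \<in> hd Ls. \<forall>b \<in> hd Ls. (a, b) \<in> E \<longleftrightarrow> (\<phi> a, \<phi> b) \<in> E) \<and>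
        (\<forall>k < length Ls. \<phi> ` (Ls ! k) = Ls' ! k) \<and>
        (pl \<longrightarrow> (\<forall>c \<in> hd Ls. \<forall>a \<in> hd Ls. \<forall>b \<in> hd Ls.
            (c, a) \<in> E \<and> (c, b) \<in> E \<longrightarrow> (P a b \<longleftrightarrow> P (\<phi> a) (\<phi> b)))))"

definition Gedges :: "('v \<times> 'v) set \<Rightarrow> 'v set set"
  where "Gedges E = {{p, c} | p c. (p, c) \<in> E}"

text \<open>An element (H; S_1,...,S_n) is represented as (F, [S_1,...,S_n]) where
 F is the edge set of H and V(H) is the union of the S_k.\<close>
definition XG :: "'v set \<Rightarrow> ('v \<times> 'v) set \<Rightarrow> nat \<Rightarrow> ('v set set \<times> 'v set list) set"
  where "XG V E n = {(F, Ss). length Ss = n \<and> \<Union> (set Ss) \<subseteq> V \<and>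
     (\<forall>k < n. \<forall>l < n. k \<noteq> l \<longrightarrow> Ss ! k \<inter> Ss ! l = {}) \<and>
     F \<subseteq> {e \<in> Gedges E. e \<subseteq> \<Union> (set Ss)}}"

text \<open>Inner face d_i (1 \<le> i \<le> n-1) merges S_i and S_(i+1); s_j inserts the
 empty set after S_j.\<close>
definition G_face :: "nat \<Rightarrow> nat \<Rightarrow> 'v set set \<times> 'v set list \<Rightarrow> 'v set set \<times> 'v set list"
  where "G_face n i x = (case x of (F, Ss) \<Rightarrow>
     (F, take (i - 1) Ss @ [Ss ! (i - 1) \<union> Ss ! i] @ drop (Suc i) Ss))"

definition G_degen :: "nat \<Rightarrow> nat \<Rightarrow> 'v set set \<times> 'v set list \<Rightarrow> 'v set set \<times> 'v set list"
  where "G_degen n j x = (case x of (F, Ss) \<Rightarrow> (F, take j Ss @ [{}] @ drop j Ss))"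

definition isoG :: "nat \<Rightarrow> 'v set set \<times> 'v set list \<Rightarrow> 'v set set \<times> 'v set list \<Rightarrow> bool"
  where "isoG n x y \<longleftrightarrow> (case x of (F, Ss) \<Rightarrow> case y of (F', Ss') \<Rightarrow>
     length Ss = length Ss' \<and>
     (\<exists>\<phi>. bij_betw \<phi> (\<Union> (set Ss)) (\<Union> (set Ss')) \<and>
        (\<lambda>e. \<phi> ` e) ` F = F' \<and>
        (\<forall>k < length Ss. \<phi> ` (Ss ! k) = Ss' ! k)))"

definition Umap :: "('v \<times> 'v) set \<Rightarrow> nat \<Rightarrow> 'v set list \<Rightarrow> 'v set set \<times> 'v set list"
  where "Umap E n Ls = ({e \<in> Gedges E. e \<subseteq> hd Ls}, map (\<lambda>k. Ls ! k - Ls ! Suc k) [0..<n])"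

definition U_culf_labelled :: "'v set \<Rightarrow> ('v \<times> 'v) set \<Rightarrow> bool"
  where "U_culf_labelled V E \<longleftrightarrow>
     culf (XT V E) T_face T_degen (XG V E) G_face G_degen (Umap E)"

text \<open>Unlabelled: pl = False is the non-planar case, pl = True the planar one
 (with planar structure P).\<close>
definition U_culf_unlabelled :: "bool \<Rightarrow> ('v \<Rightarrow> 'v \<Rightarrow> bool) \<Rightarrow> 'v set \<Rightarrow> ('v \<times> 'v) set \<Rightarrow> bool"
  where "U_culf_unlabelled pl P V E \<longleftrightarrow>
     culf (qlevels (XT V E) (isoT pl P E))
          (qface (XT V E) (isoT pl P E) T_face) (qdegen (XT V E) (isoT pl P E) T_degen)
          (qlevels (XG V E) isoG)
          (qface (XG V E) isoG G_face) (qdegen (XG V E) isoG G_degen)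
          (qmap (XG V E) isoG (Umap E))"

end

theory Submission
  imports Defs "HOL-Combinatorics.Transposition"
begin

(*
  U commutes with inner faces and degeneracies, and it is injective: the layer L_k of a layering
  is the union of the parts S_(k+1), ..., S_n of its image.  Hence an inner-face or degeneracy
  square is a pullback as soon as every partition lying over the image of a smaller simplex is
  itself in the image of U.  For the one-vertex tree this is automatic.  For a tree with at most
  one edge r -> w, isomorphism classes on both sides are determined by cardinalities, and the
  cardinalities of any partition are those of a layering by initial segments of the sequence r, w,
  which are lower sets; this gives the unlabelled statement.

  Conversely, an edge p -> c gives the partition ({p}, {c}) of the admissible set {p, c}, whose
  only possible lift has the layer {c}, which is not a lower set.  Two edges give an admissible
  path y - x - z, and a lift of ({x}, {y, z}) up to isomorphism would make both y and z parents
  of x.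
*)

lemma nth_delete:
  "i < length xs \<Longrightarrow> k < length xs - 1 \<Longrightarrow>
   (take i xs @ drop (Suc i) xs) ! k = xs ! (if k < i then k else Suc k)"
  by (auto simp: nth_append min_def)

lemma nth_duplicate:
  "j < length xs \<Longrightarrow> k \<le> length xs \<Longrightarrow>
   (take (Suc j) xs @ drop j xs) ! k = xs ! (if k \<le> j then k else k - 1)"
  by (auto simp: nth_append min_def intro!: arg_cong[where f="(!) xs"])

lemma nth_merge:
  "0 < i \<Longrightarrow> i < length xs \<Longrightarrow> k < length xs - 1 \<Longrightarrow>
   (take (i - 1) xs @ [z] @ drop (Suc i) xs) ! k =
     (if k < i - 1 then xs ! k else if k = i - 1 then z else xs ! Suc k)"
  by (auto simp: nth_append min_def)

lemma nth_insert:
  "j \<le> length xs \<Longrightarrow> k \<le> length xs \<Longrightarrow>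
   (take j xs @ [z] @ drop j xs) ! k = (if k < j then xs ! k else
     if k = j then z else xs ! (k - 1))"
  by (auto simp: nth_append min_def)

lemma Union_set_conv_UN_nth: "\<Union> (set xs) = (\<Union>k<length xs. xs ! k)"
  by (auto simp: set_conv_nth)

lemma chain_antimono:
  assumes "\<And>j. j < n \<Longrightarrow> L (Suc j) \<subseteq> L j" and "k \<le> l" and "l \<le> n"
  shows "L l \<subseteq> L k"
  using assms(2,3)
proof (induction l rule: dec_induct)
  case (step m)
  then show ?case using assms(1)[of m] by auto
qed simp

lemma chain_diffs_disjoint:
  assumes "\<And>j. j < n \<Longrightarrow> L (Suc j) \<subseteq> L j" and "j < n" "l < n" "j \<noteq> l"
  shows "(L j - L (Suc j)) \<inter> (L l - L (Suc l)) = {}"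
proof (cases "j < l")
  case True
  then have "L l \<subseteq> L (Suc j)" using chain_antimono[of n L "Suc j" l] assms by simp
  then show ?thesis by blast
next
  case False
  then have "L j \<subseteq> L (Suc l)" using chain_antimono[of n L "Suc l" j] assms by simp
  then show ?thesis by blast
qed

lemma UN_chain_diffs:
  assumes "\<And>j. j < n \<Longrightarrow> L (Suc j) \<subseteq> L j" and "k \<le> n"
  shows "(\<Union>j\<in>{k..<n}. L j - L (Suc j)) = L k - L n"
  using assms
proof (induction n)
  case (Suc n)
  show ?case
  proof (cases "k = Suc n")
    case False
    then have "k \<le> n" using Suc.prems(2) by simp
    then have IH: "(\<Union>j\<in>{k..<n}. L j - L (Suc j)) = L k - L n"
      using Suc by simp
    have "L (Suc n) \<subseteq> L n" "L n \<subseteq> L k"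
      using Suc.prems(1) chain_antimono[of n L k n] \<open>k \<le> n\<close> by auto
    moreover have "{k..<Suc n} = insert n {k..<n}" using \<open>k \<le> n\<close> by auto
    ultimately show ?thesis using IH by auto
  qed simp
qed simp

lemma lower_refl: "lower E S S"
  unfolding lower_def by (auto elim: converse_rtranclE)

lemma lower_empty: "lower E S {}"
  unfolding lower_def by auto

lemma lower_Un: "lower E S L \<Longrightarrow> lower E S M \<Longrightarrow> lower E S (L \<union> M)"
  unfolding lower_def by blast

lemma admissible_diff_lower:
  assumes "lower E V L" "lower E V M" "M \<subseteq> L"
  shows "admissible V E (L - M)"
proof -
  have "layering E V [V, L, M, {}]"
    unfolding layering_def using assms lower_refl[of E V] lower_empty[of E V]
    by (auto simp: nth_Cons less_Suc_eq lower_def split: nat.splits)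
  then show ?thesis unfolding admissible_def
    by (intro exI[of _ "[V, L, M, {}]"] exI[of _ 1] exI[of _ 2]) simp
qed

lemma admissible_subset:
  assumes "admissible V E A"
  shows "A \<subseteq> V"
proof -
  obtain Ls i j where "layering E V Ls" "i \<le> j" "j < length Ls" "A = Ls ! i - Ls ! j"
    using assms unfolding admissible_def by blast
  then have "lower E V (Ls ! i)" unfolding layering_def by simp
  then show ?thesis using \<open>A = Ls ! i - Ls ! j\<close> unfolding lower_def by blast
qed

definition ancestors :: "('v \<times> 'v) set \<Rightarrow> 'v \<Rightarrow> 'v set"
  where "ancestors E v = {u. (u, v) \<in> E\<^sup>*}"

context
  fixes V :: "'v set" and r :: 'v and E :: "('v \<times> 'v) set"
  assumes tree: "rooted_tree V r E"
begin

lemma tree_edge_in: "(a, b) \<in> E \<Longrightarrow> a \<in> V \<and> b \<in> V"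
  using tree unfolding rooted_tree_def by blast

lemma tree_no_edge_to_root: "(p, r) \<notin> E"
  using tree unfolding rooted_tree_def by blast

lemma tree_parent_unique:
  assumes "(p, c) \<in> E" "(q, c) \<in> E"
  shows "p = q"
proof -
  have "c \<in> V - {r}" using tree_edge_in[OF assms(1)] tree_no_edge_to_root assms(1) by auto
  then show ?thesis using tree assms unfolding rooted_tree_def by blast
qed

lemma tree_reach_from_root: "v \<in> V \<Longrightarrow> (r, v) \<in> E\<^sup>*"
  using tree unfolding rooted_tree_def by blast

lemma tree_ancestor_of_child: "(v, c) \<in> E\<^sup>* \<Longrightarrow> (p, c) \<in> E \<Longrightarrow> v = c \<or> (v, p) \<in> E\<^sup>*"
  by (erule rtranclE) (auto dest: tree_parent_unique)

lemma tree_acyclic: "(v, v) \<notin> E\<^sup>+"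
proof
  assume cyc: "(v, v) \<in> E\<^sup>+"
  have "(w, w) \<notin> E\<^sup>+" if "(r, w) \<in> E\<^sup>*" for w
    using that
  proof (induction rule: rtrancl_induct)
    case base
    show ?case using tranclD2[of r r E] tree_no_edge_to_root by blast
  next
    case (step u w)
    show ?case
    proof
      assume "(w, w) \<in> E\<^sup>+"
      then obtain x where "(w, x) \<in> E\<^sup>*" "(x, w) \<in> E" using tranclD2 by metis
      moreover have "x = u" using tree_parent_unique \<open>(x, w) \<in> E\<close> step.hyps(2) by blast
      ultimately have "(u, u) \<in> E\<^sup>+" using step.hyps(2) by (meson rtrancl_into_trancl2)
      with step.IH show False by blast
    qed
  qed
  moreover obtain x where "(v, x) \<in> E" using tranclD[OF cyc] by blast
  ultimately show False using cyc tree_edge_in tree_reach_from_root by blast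
qed

lemma tree_ancestor_antisym: "(a, b) \<in> E\<^sup>* \<Longrightarrow> (b, a) \<in> E\<^sup>* \<Longrightarrow> a = b"
  using tree_acyclic rtrancl_eq_or_trancl trancl_rtrancl_trancl by metis

lemma finite_tree_edges: "finite E"
  using tree unfolding rooted_tree_def by (meson finite_SigmaI finite_subset)

lemma ancestors_subset: "v \<in> V \<Longrightarrow> ancestors E v \<subseteq> V"
  unfolding ancestors_def by (auto elim: converse_rtranclE dest: tree_edge_in)

lemma ancestors_of_child: "(g, p) \<in> E \<Longrightarrow> ancestors E p = insert p (ancestors E g)"
  unfolding ancestors_def using tree_ancestor_of_child by auto

lemma descendant_of_child_notin_ancestors: "(g, p) \<in> E \<Longrightarrow> (p, v) \<in> E\<^sup>* \<Longrightarrow> v \<notin> ancestors E g"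
  unfolding ancestors_def using tree_acyclic
  by (metis mem_Collect_eq rtrancl_into_trancl2 rtrancl_trans)

lemma tree_lowerI:
  assumes "L \<subseteq> V" "\<And>u v. u \<in> L \<Longrightarrow> (v, u) \<in> E\<^sup>* \<Longrightarrow> v \<in> L"
  shows "lower E V L"
proof -
  have "E \<inter> V \<times> V = E" using tree unfolding rooted_tree_def by blast
  then show ?thesis unfolding lower_def using assms by simp
qed

lemma lower_insert_child_ancestors:
  assumes "(p, c) \<in> E"
  shows "lower E V (insert c (ancestors E p))"
proof (rule tree_lowerI)
  show "insert c (ancestors E p) \<subseteq> V" using ancestors_subset tree_edge_in[OF assms] by blast
next
  fix u v assume "u \<in> insert c (ancestors E p)" "(v, u) \<in> E\<^sup>*"
  then show "v \<in> insert c (ancestors E p)"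
    using tree_ancestor_of_child[of v c p] assms unfolding ancestors_def
    by (auto intro: rtrancl_trans)
qed

lemma lower_strict_ancestors:
  assumes "v \<in> V"
  shows "lower E V (ancestors E v - {v})"
proof (rule tree_lowerI)
  show "ancestors E v - {v} \<subseteq> V" using ancestors_subset[OF assms] by blast
next
  fix u w assume "u \<in> ancestors E v - {v}" "(w, u) \<in> E\<^sup>*"
  then show "w \<in> ancestors E v - {v}"
    unfolding ancestors_def using tree_ancestor_antisym by (auto intro: rtrancl_trans)
qed

lemma admissible_edge:
  assumes pc: "(p, c) \<in> E"
  shows "admissible V E {p, c}"
proof -
  have "c \<notin> ancestors E p" using descendant_of_child_notin_ancestors[OF pc, of c] by simp
  then have "insert c (ancestors E p) - (ancestors E p - {p}) = {p, c}"
    by (auto simp: ancestors_def)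
  moreover have "admissible V E (insert c (ancestors E p) - (ancestors E p - {p}))"
    using tree_edge_in[OF pc]
    by (intro admissible_diff_lower lower_insert_child_ancestors lower_strict_ancestors pc) auto
  ultimately show ?thesis by simp
qed

lemma admissible_path:
  assumes gp: "(g, p) \<in> E" and qc: "(q, c) \<in> E" and q: "q = g \<or> q = p"
  shows "admissible V E {g, p, c}"
proof -
  have anc_q: "ancestors E q \<subseteq> insert p (ancestors E g)"
    using q ancestors_of_child[OF gp] by (auto simp: ancestors_def)
  have p: "p \<notin> ancestors E g" using descendant_of_child_notin_ancestors[OF gp, of p] by simp
  have c: "c \<notin> ancestors E g"
  proof (cases "q = g")
    case True
    then show ?thesis using descendant_of_child_notin_ancestors[OF qc, of c] by simp
  next
    case False
    then have "(p, c) \<in> E\<^sup>*" using q qc by simp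
    then show ?thesis using descendant_of_child_notin_ancestors[OF gp] by blast
  qed
  let ?L = "insert c (ancestors E q) \<union> insert p (ancestors E g)" and ?M = "ancestors E g - {g}"
  have "?L - ?M = {g, p, c}" using anc_q p c by (auto simp: ancestors_def)
  moreover have "admissible V E (?L - ?M)"
    using tree_edge_in[OF gp] anc_q
    by (intro admissible_diff_lower lower_Un lower_insert_child_ancestors lower_strict_ancestors
        qc gp) auto
  ultimately show ?thesis by simp
qed

end

context
  fixes V :: "'v set" and E :: "('v \<times> 'v) set" and n :: nat and Ls :: "'v set list"
  assumes Ls: "Ls \<in> XT V E n"
begin

lemma XT_length: "length Ls = Suc n"
  using Ls by (simp add: XT_def)

lemma XT_nth_0: "Ls ! 0 = hd Ls"
  using XT_length by (cases Ls) auto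

lemma XT_admissible: "admissible V E (hd Ls)"
  using Ls by (simp add: XT_def)

lemma XT_lower: "k \<le> n \<Longrightarrow> lower E (hd Ls) (Ls ! k)"
  using Ls by (simp add: XT_def layering_def less_Suc_eq_le)

lemma XT_last: "Ls ! n = {}"
proof -
  have "last Ls = {}" "Ls \<noteq> []" using Ls by (simp_all add: XT_def layering_def)
  then show ?thesis using XT_length by (simp add: last_conv_nth)
qed

lemma XT_step: "k < n \<Longrightarrow> Ls ! Suc k \<subseteq> Ls ! k"
  using Ls XT_length by (simp add: XT_def layering_def)

lemma XT_antimono: "k \<le> l \<Longrightarrow> l \<le> n \<Longrightarrow> Ls ! l \<subseteq> Ls ! k"
  using chain_antimono[of n "(!) Ls"] XT_step by blast

lemma XT_subset_hd: "k \<le> n \<Longrightarrow> Ls ! k \<subseteq> hd Ls"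
  using XT_antimono[of 0 k] XT_nth_0 by simp

lemma XT_subset: "k \<le> n \<Longrightarrow> Ls ! k \<subseteq> V"
  using XT_subset_hd admissible_subset[OF XT_admissible] by blast

end

lemma XT_I:
  assumes "length Ls = Suc n" "admissible V E (Ls ! 0)"
    and "\<And>k. k \<le> n \<Longrightarrow> lower E (Ls ! 0) (Ls ! k)"
    and "\<And>k. k < n \<Longrightarrow> Ls ! Suc k \<subseteq> Ls ! k" and "Ls ! n = {}"
  shows "Ls \<in> XT V E n"
proof -
  have "Ls \<noteq> []" using assms(1) by auto
  then have "hd Ls = Ls ! 0" "last Ls = Ls ! n" using assms(1)
    by (simp_all add: hd_conv_nth last_conv_nth)
  then show ?thesis
    using assms unfolding XT_def layering_def by (auto simp: less_Suc_eq_le)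
qed

lemma T_face_XT:
  assumes Ls: "Ls \<in> XT V E n" and i: "0 < i" "i < n"
  shows "T_face n i Ls \<in> XT V E (n - 1)"
proof -
  let ?L = "T_face n i Ls"
  have nth: "?L ! k = Ls ! (if k < i then k else Suc k)" if "k < n" for k
    unfolding T_face_def using nth_delete[of i Ls k] that i XT_length[OF Ls] by simp
  have hd: "?L ! 0 = hd Ls" using nth[of 0] i XT_nth_0[OF Ls] by simp
  show ?thesis
  proof (rule XT_I)
    show "length ?L = Suc (n - 1)" using XT_length[OF Ls] i by (simp add: T_face_def)
    show "admissible V E (?L ! 0)" using hd XT_admissible[OF Ls] by simp
    show "lower E (?L ! 0) (?L ! k)" if "k \<le> n - 1" for k
      using that nth[of k] i hd XT_lower[OF Ls, of "if k < i then k else Suc k"] by auto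
    show "?L ! Suc k \<subseteq> ?L ! k" if "k < n - 1" for k
    proof -
      have "Suc (Suc k) \<le> n" using that by linarith
      then show ?thesis
        using nth[of k] nth[of "Suc k"]
          XT_antimono[OF Ls, of "if k < i then k else Suc k"
            "if Suc k < i then Suc k else Suc (Suc k)"]
        by (auto split: if_splits)
    qed
    show "?L ! (n - 1) = {}" using nth[of "n - 1"] i XT_last[OF Ls] by auto
  qed
qed

lemma T_degen_XT:
  assumes Ls: "Ls \<in> XT V E n" and j: "j \<le> n"
  shows "T_degen n j Ls \<in> XT V E (Suc n)"
proof -
  let ?L = "T_degen n j Ls"
  have nth: "?L ! k = Ls ! (if k \<le> j then k else k - 1)" if "k \<le> Suc n" for k
    unfolding T_degen_def using nth_duplicate[of j Ls k] that j XT_length[OF Ls] by simp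
  have hd: "?L ! 0 = hd Ls" using nth[of 0] XT_nth_0[OF Ls] by simp
  show ?thesis
  proof (rule XT_I)
    show "length ?L = Suc (Suc n)" using XT_length[OF Ls] j by (simp add: T_degen_def)
    show "admissible V E (?L ! 0)" using hd XT_admissible[OF Ls] by simp
    show "lower E (?L ! 0) (?L ! k)" if "k \<le> Suc n" for k
      using that nth[of k] hd XT_lower[OF Ls, of "if k \<le> j then k else k - 1"] j by auto
    show "?L ! Suc k \<subseteq> ?L ! k" if "k < Suc n" for k
      using that nth[of k] nth[of "Suc k"] j
        XT_antimono[OF Ls, of "if k \<le> j then k else k - 1" "if Suc k \<le> j then Suc k else k"]
      by (auto split: if_splits)
    show "?L ! Suc n = {}" using nth[of "Suc n"] j XT_last[OF Ls] by auto
  qed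
qed

lemma Umap_part: "k < n \<Longrightarrow> snd (Umap E n Ls) ! k = Ls ! k - Ls ! Suc k"
  by (simp add: Umap_def)

lemma XT_layer_eq_UN_parts:
  assumes Ls: "Ls \<in> XT V E n" and k: "k \<le> n"
  shows "Ls ! k = (\<Union>j\<in>{k..<n}. snd (Umap E n Ls) ! j)"
proof -
  have "Ls ! k = (\<Union>j\<in>{k..<n}. Ls ! j - Ls ! Suc j)"
    using UN_chain_diffs[of n "(!) Ls" k] XT_step[OF Ls] XT_last[OF Ls] k by simp
  also have "\<dots> = (\<Union>j\<in>{k..<n}. snd (Umap E n Ls) ! j)"
    by (rule SUP_cong) (simp_all add: Umap_part)
  finally show ?thesis .
qed

lemma inj_on_Umap: "inj_on (Umap E n) (XT V E n)"
proof
  fix Ls Ls' assume Ls: "Ls \<in> XT V E n" and Ls': "Ls' \<in> XT V E n"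
    and eq: "Umap E n Ls = Umap E n Ls'"
  show "Ls = Ls'"
  proof (rule nth_equalityI)
    show "length Ls = length Ls'" using XT_length[OF Ls] XT_length[OF Ls'] by simp
    show "Ls ! k = Ls' ! k" if "k < length Ls" for k
      using XT_layer_eq_UN_parts[OF Ls, of k] XT_layer_eq_UN_parts[OF Ls', of k] that eq
        XT_length[OF Ls]
      by simp
  qed
qed

lemma Union_Umap_parts: "Ls \<in> XT V E n \<Longrightarrow> \<Union> (set (snd (Umap E n Ls))) = hd Ls"
  using XT_layer_eq_UN_parts[of Ls V E n 0] XT_nth_0[of Ls V E n]
  by (simp add: Union_set_conv_UN_nth atLeast0LessThan Umap_def)

lemma Umap_XG:
  assumes Ls: "Ls \<in> XT V E n"
  shows "Umap E n Ls \<in> XG V E n"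
proof -
  obtain F Ss where U: "Umap E n Ls = (F, Ss)" by fastforce
  have F: "F = {e \<in> Gedges E. e \<subseteq> hd Ls}" and len: "length Ss = n"
    using U by (auto simp: Umap_def)
  have parts: "Ss ! k = Ls ! k - Ls ! Suc k" if "k < n" for k
    using Umap_part[where E=E and Ls=Ls, OF that] U by simp
  have "Ss ! k \<inter> Ss ! l = {}" if "k < n" "l < n" "k \<noteq> l" for k l
    using chain_diffs_disjoint[of n "(!) Ls" k l] XT_step[OF Ls] that parts by simp
  moreover have "\<Union> (set Ss) = hd Ls" using Union_Umap_parts[OF Ls] U by simp
  ultimately show ?thesis
    using admissible_subset[OF XT_admissible[OF Ls]] unfolding U XG_def F by (simp add: len)
qed

lemma XG_length: "c \<in> XG V E n \<Longrightarrow> length (snd c) = n"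
  by (cases c) (simp add: XG_def)

lemma mem_XG_iff:
  "c \<in> XG V E n \<longleftrightarrow> length (snd c) = n \<and> \<Union> (set (snd c)) \<subseteq> V \<and>
     (\<forall>k < n. \<forall>l < n. k \<noteq> l \<longrightarrow> snd c ! k \<inter> snd c ! l = {}) \<and>
     fst c \<subseteq> {e \<in> Gedges E. e \<subseteq> \<Union> (set (snd c))}"
  by (cases c) (simp add: XG_def)

lemma G_face_conv:
  "G_face n i c =
    (fst c, take (i - 1) (snd c) @ [snd c ! (i - 1) \<union> snd c ! i] @ drop (Suc i) (snd c))"
  by (cases c) (simp add: G_face_def)

lemma G_degen_conv: "G_degen n j c = (fst c, take j (snd c) @ [{}] @ drop j (snd c))"
  by (cases c) (simp add: G_degen_def)

lemma nth_merge_disjoint: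
  assumes D: "\<And>k l x. k < length xs \<Longrightarrow> l < length xs \<Longrightarrow> x \<in> xs ! k \<Longrightarrow> x \<in> xs ! l \<Longrightarrow> k = l"
    and i: "0 < i" "i < length xs" and kl: "k < length xs - 1" "l < length xs - 1" "k \<noteq> l"
  shows "(take (i - 1) xs @ [xs ! (i - 1) \<union> xs ! i] @ drop (Suc i) xs) ! k \<inter>
         (take (i - 1) xs @ [xs ! (i - 1) \<union> xs ! i] @ drop (Suc i) xs) ! l = {}"
proof -
  define grp where "grp m = (if m < i - 1 then {m} else if m = i - 1 then {i - 1, i} else {Suc m})"
    for m :: nat
  have part: "(take (i - 1) xs @ [xs ! (i - 1) \<union> xs ! i] @ drop (Suc i) xs) ! m =
    (\<Union>p\<in>grp m. xs ! p)"
    if "m < length xs - 1" for m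
    unfolding nth_merge[OF i that] grp_def by auto
  have "grp k \<inter> grp l = {}" "grp k \<subseteq> {..<length xs}" "grp l \<subseteq> {..<length xs}"
    using kl i unfolding grp_def by auto
  then show ?thesis unfolding part[OF kl(1)] part[OF kl(2)] using D by blast
qed

lemma Union_G_face:
  assumes i: "0 < i" "i < length (snd c)"
  shows "\<Union> (set (snd (G_face n i c))) = \<Union> (set (snd c))"
proof -
  let ?S = "snd c"
  have "?S = take (i - 1) ?S @ ?S ! (i - 1) # ?S ! i # drop (Suc i) ?S"
    using i id_take_nth_drop[of "i - 1" ?S] Cons_nth_drop_Suc[of i ?S] by simp
  then have "set ?S = set (take (i - 1) ?S) \<union> {?S ! (i - 1), ?S ! i} \<union> set (drop (Suc i) ?S)"
    by (metis Un_insert_left Un_insert_right insert_is_Un set_append set_simps(2) sup_assoc)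
  then show ?thesis by (auto simp: G_face_conv)
qed

lemma Union_G_face_XG:
  "c \<in> XG V E n \<Longrightarrow> 0 < i \<Longrightarrow> i < n \<Longrightarrow> \<Union> (set (snd (G_face n i c))) = \<Union> (set (snd c))"
  by (rule Union_G_face) (simp_all add: XG_length)

lemma Union_G_degen: "\<Union> (set (snd (G_degen n j c))) = \<Union> (set (snd c))"
  by (simp add: G_degen_conv) (metis Sup_union_distrib append_take_drop_id set_append)

lemma XG_part_subset:
  assumes c: "c \<in> XG V E n" and k: "k < n"
  shows "snd c ! k \<subseteq> V"
proof -
  have "snd c ! k \<in> set (snd c)" using c k by (simp add: mem_XG_iff)
  from Union_upper[OF this] show ?thesis using c unfolding mem_XG_iff by blast
qed

lemma XG_disjointD:
  "c \<in> XG V E n \<Longrightarrow> k < n \<Longrightarrow> l < n \<Longrightarrow> x \<in> snd c ! k \<Longrightarrow> x \<in> snd c ! l \<Longrightarrow> k = l"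
  unfolding mem_XG_iff by blast

lemma G_face_XG:
  assumes c: "c \<in> XG V E n" and i: "0 < i" "i < n"
  shows "G_face n i c \<in> XG V E (n - 1)"
proof -
  have len: "length (snd c) = n" using c by (rule XG_length)
  have "snd (G_face n i c) ! k \<inter> snd (G_face n i c) ! l = {}"
    if "k < n - 1" "l < n - 1" "k \<noteq> l" for k l
    unfolding G_face_conv snd_conv
    by (rule nth_merge_disjoint) (use XG_disjointD[OF c] i that len in auto)
  then show ?thesis
    using c Union_G_face_XG[OF c i] i len by (auto simp: mem_XG_iff G_face_conv)
qed

lemma G_degen_XG:
  assumes c: "c \<in> XG V E n" and j: "j \<le> n"
  shows "G_degen n j c \<in> XG V E (Suc n)"
proof -
  have len: "length (snd c) = n" using c by (rule XG_length)
  define idx where "idx m = (if m < j then m else m - 1)" for m :: nat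
  have ins: "snd (G_degen n j c) ! k = (if k = j then {} else snd c ! idx k)" if "k < Suc n" for k
  proof -
    have "snd (G_degen n j c) ! k = (if k < j then snd c ! k else
      if k = j then {} else snd c ! (k - 1))"
      unfolding G_degen_conv snd_conv by (rule nth_insert) (use j len that in auto)
    then show ?thesis unfolding idx_def by simp
  qed
  have "snd (G_degen n j c) ! k \<inter> snd (G_degen n j c) ! l = {}"
    if "k < Suc n" "l < Suc n" "k \<noteq> l" for k l
  proof (cases "k = j \<or> l = j")
    case False
    then have "idx k < n" "idx l < n" "idx k \<noteq> idx l" using that j unfolding idx_def by auto
    then show ?thesis using ins[OF that(1)] ins[OF that(2)] False c by (simp add: mem_XG_iff)
  qed (use ins that in auto)
  then show ?thesis
    using c Union_G_degen[of n j c] j len by (auto simp: mem_XG_iff G_degen_conv)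
qed

lemma Umap_T_face:
  assumes Ls: "Ls \<in> XT V E n" and i: "0 < i" "i < n"
  shows "Umap E (n - 1) (T_face n i Ls) = G_face n i (Umap E n Ls)"
proof -
  have len: "length Ls = Suc n" by (rule XT_length[OF Ls])
  have hd: "hd (T_face n i Ls) = hd Ls" using i len by (cases Ls) (auto simp: T_face_def)
  have face: "T_face n i Ls ! k = Ls ! (if k < i then k else Suc k)" if "k < n" for k
    unfolding T_face_def using nth_delete[of i Ls k] that i len by simp
  have chain: "Ls ! Suc i \<subseteq> Ls ! i" "Ls ! i \<subseteq> Ls ! (i - 1)"
    using XT_antimono[OF Ls] i by auto
  have "map (\<lambda>k. T_face n i Ls ! k - T_face n i Ls ! Suc k) [0..<n - 1] =
    snd (G_face n i (Umap E n Ls))"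
  proof (rule nth_equalityI)
    fix k assume "k < length (map (\<lambda>k. T_face n i Ls ! k - T_face n i Ls ! Suc k) [0..<n - 1])"
    then have k: "k < n - 1" by simp
    have merge: "snd (G_face n i (Umap E n Ls)) ! k =
      (if k < i - 1 then Ls ! k - Ls ! Suc k
       else if k = i - 1 then (Ls ! (i - 1) - Ls ! i) \<union> (Ls ! i - Ls ! Suc i)
       else Ls ! Suc k - Ls ! Suc (Suc k))"
    proof -
      have "snd (G_face n i (Umap E n Ls)) ! k = (if k < i - 1 then snd (Umap E n Ls) ! k
        else if k = i - 1 then snd (Umap E n Ls) ! (i - 1) \<union> snd (Umap E n Ls) ! i
        else snd (Umap E n Ls) ! Suc k)"
        unfolding G_face_conv snd_conv by (rule nth_merge) (use i k in \<open>auto simp: Umap_def\<close>)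
      then show ?thesis using i k by (simp add: Umap_part)
    qed
    show "map (\<lambda>k. T_face n i Ls ! k - T_face n i Ls ! Suc k) [0..<n - 1] ! k =
      snd (G_face n i (Umap E n Ls)) ! k"
      using k face[of k] face[of "Suc k"] merge chain i by (subst nth_map_upt) auto
  qed (use i in \<open>simp add: G_face_conv Umap_def\<close>)
  then show ?thesis using hd by (simp add: Umap_def G_face_conv)
qed

lemma Umap_T_degen:
  assumes len: "length Ls = Suc n" and j: "j \<le> n"
  shows "Umap E (Suc n) (T_degen n j Ls) = G_degen n j (Umap E n Ls)"
proof -
  have hd: "hd (T_degen n j Ls) = hd Ls" using len by (cases Ls) (auto simp: T_degen_def)
  have degen: "T_degen n j Ls ! k = Ls ! (if k \<le> j then k else k - 1)" if "k \<le> Suc n" for k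
    unfolding T_degen_def using nth_duplicate[of j Ls k] that j len by simp
  have "map (\<lambda>k. T_degen n j Ls ! k - T_degen n j Ls ! Suc k) [0..<Suc n] =
    snd (G_degen n j (Umap E n Ls))"
  proof (rule nth_equalityI)
    fix k assume "k < length (map (\<lambda>k. T_degen n j Ls ! k - T_degen n j Ls ! Suc k) [0..<Suc n])"
    then have k: "k < Suc n" by simp
    have ins: "snd (G_degen n j (Umap E n Ls)) ! k =
      (if k < j then Ls ! k - Ls ! Suc k else if k = j then {} else Ls ! (k - 1) - Ls ! k)"
    proof -
      have "snd (G_degen n j (Umap E n Ls)) ! k = (if k < j then snd (Umap E n Ls) ! k
        else if k = j then {} else snd (Umap E n Ls) ! (k - 1))"
        unfolding G_degen_conv snd_conv by (rule nth_insert) (use j k in \<open>auto simp: Umap_def\<close>)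
      then show ?thesis using j k by (simp add: Umap_part)
    qed
    show "map (\<lambda>k. T_degen n j Ls ! k - T_degen n j Ls ! Suc k) [0..<Suc n] ! k =
      snd (G_degen n j (Umap E n Ls)) ! k"
      using k degen[of k] degen[of "Suc k"] ins by (subst nth_map_upt) auto
  qed (use j in \<open>simp add: G_degen_conv Umap_def\<close>)
  then show ?thesis using hd by (simp add: Umap_def G_degen_conv)
qed

section \<open>Isomorphisms and cardinality invariants\<close>

definition part_cards :: "'v set set \<times> 'v set list \<Rightarrow> bool \<times> nat list"
  where "part_cards c = (fst c \<noteq> {}, map card (snd c))"

lemma isoT_iff:
  "isoT pl P E m Ls Ls' \<longleftrightarrow> (\<exists>\<phi>. bij_betw \<phi> (hd Ls) (hd Ls') \<and>
     (\<forall>a \<in> hd Ls. \<forall>b \<in> hd Ls. (a, b) \<in> E \<longleftrightarrow> (\<phi> a, \<phi> b) \<in> E) \<and>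
     map ((`) \<phi>) Ls = Ls' \<and>
     (pl \<longrightarrow> (\<forall>c \<in> hd Ls. \<forall>a \<in> hd Ls. \<forall>b \<in> hd Ls.
        (c, a) \<in> E \<and> (c, b) \<in> E \<longrightarrow> (P a b \<longleftrightarrow> P (\<phi> a) (\<phi> b)))))"
  unfolding isoT_def by (auto simp: list_eq_iff_nth_eq)

lemma isoG_iff:
  "isoG m c c' \<longleftrightarrow> (\<exists>\<phi>. bij_betw \<phi> (\<Union> (set (snd c))) (\<Union> (set (snd c'))) \<and>
     (`) \<phi> ` fst c = fst c' \<and> map ((`) \<phi>) (snd c) = snd c')"
  by (cases c; cases c') (auto simp: isoG_def list_eq_iff_nth_eq)

lemma isoT_refl: "isoT pl P E m Ls Ls"
  unfolding isoT_iff by (intro exI[of _ id]) auto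

lemma isoG_refl: "isoG m c c"
  unfolding isoG_iff by (intro exI[of _ id]) auto

lemma isoG_sym:
  assumes c: "c \<in> XG V E n" and iso: "isoG m c c'"
  shows "isoG m c' c"
proof -
  obtain \<phi> where bij: "bij_betw \<phi> (\<Union> (set (snd c))) (\<Union> (set (snd c')))"
    and F: "(`) \<phi> ` fst c = fst c'" and S: "map ((`) \<phi>) (snd c) = snd c'"
    using iso unfolding isoG_iff by blast
  define \<psi> where "\<psi> = inv_into (\<Union> (set (snd c))) \<phi>"
  have cancel: "\<psi> ` \<phi> ` e = e" if "e \<subseteq> \<Union> (set (snd c))" for e
    unfolding \<psi>_def using inv_into_image_cancel[OF bij_betw_imp_inj_on[OF bij] that] .
  have "e \<subseteq> \<Union> (set (snd c))" if "e \<in> fst c" for e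
    using c that by (auto simp: mem_XG_iff)
  then have "(\<lambda>e. \<psi> ` \<phi> ` e) ` fst c = (\<lambda>e. e) ` fst c"
    using cancel by (intro image_cong) auto
  then have "(`) \<psi> ` fst c' = fst c"
    unfolding F[symmetric] image_image by (simp only: image_ident)
  moreover have "map ((`) \<psi>) (snd c') = snd c"
    unfolding S[symmetric] map_map by (rule map_idI) (metis cancel Union_upper comp_apply)
  moreover have "bij_betw \<psi> (\<Union> (set (snd c'))) (\<Union> (set (snd c)))"
    unfolding \<psi>_def by (rule bij_betw_inv_into[OF bij])
  ultimately show ?thesis unfolding isoG_iff by blast
qed

lemma isoG_trans:
  assumes "isoG m c c'" "isoG m c' c''"
  shows "isoG m c c''"
proof -
  obtain \<phi> where \<phi>: "bij_betw \<phi> (\<Union> (set (snd c))) (\<Union> (set (snd c')))"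
    "(`) \<phi> ` fst c = fst c'" "map ((`) \<phi>) (snd c) = snd c'"
    using assms(1) unfolding isoG_iff by blast
  obtain \<psi> where \<psi>: "bij_betw \<psi> (\<Union> (set (snd c'))) (\<Union> (set (snd c'')))"
    "(`) \<psi> ` fst c' = fst c''" "map ((`) \<psi>) (snd c') = snd c''"
    using assms(2) unfolding isoG_iff by blast
  have comp: "(`) (\<psi> \<circ> \<phi>) = (`) \<psi> \<circ> (`) \<phi>" by (auto simp: fun_eq_iff image_comp)
  have "(`) (\<psi> \<circ> \<phi>) ` fst c = (`) \<psi> ` (`) \<phi> ` fst c" by (simp only: comp image_comp)
  moreover have "map ((`) (\<psi> \<circ> \<phi>)) (snd c) = map ((`) \<psi>) (map ((`) \<phi>) (snd c))"
    by (simp only: comp map_map)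
  ultimately show ?thesis
    unfolding isoG_iff using \<phi> \<psi> by (intro exI[of _ "\<psi> \<circ> \<phi>"]) (simp add: bij_betw_trans)
qed

lemma qclass_isoG_eq:
  assumes "u \<in> XG V E n" "v \<in> XG V E n" "isoG n u v"
  shows "qclass (XG V E n) (isoG n) u = qclass (XG V E n) (isoG n) v"
  unfolding qclass_def using assms isoG_sym isoG_trans by blast

lemma isoG_G_face:
  assumes iso: "isoG m c c'" and i: "0 < i" "i < length (snd c)"
  shows "isoG m' (G_face n i c) (G_face n' i c')"
proof -
  obtain \<phi> where bij: "bij_betw \<phi> (\<Union> (set (snd c))) (\<Union> (set (snd c')))"
    and F: "(`) \<phi> ` fst c = fst c'" and S: "map ((`) \<phi>) (snd c) = snd c'"
    using iso unfolding isoG_iff by blast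
  have "length (snd c') = length (snd c)" using S by (metis length_map)
  then have "\<Union> (set (snd (G_face n i c))) = \<Union> (set (snd c))"
    "\<Union> (set (snd (G_face n' i c'))) = \<Union> (set (snd c'))"
    using Union_G_face[of i c n] Union_G_face[of i c' n'] i by auto
  moreover have "map ((`) \<phi>) (snd (G_face n i c)) = snd (G_face n' i c')"
    using i unfolding G_face_conv S[symmetric] by (simp add: take_map drop_map image_Un)
  ultimately show ?thesis unfolding isoG_iff using bij F by (auto simp: G_face_conv)
qed

lemma image_Gedges_within:
  assumes bij: "bij_betw \<phi> S S'" and E: "\<forall>a \<in> S. \<forall>b \<in> S. (a, b) \<in> E \<longleftrightarrow> (\<phi> a, \<phi> b) \<in> E"
  shows "(`) \<phi> ` {e \<in> Gedges E. e \<subseteq> S} = {e \<in> Gedges E. e \<subseteq> S'}"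
proof (intro equalityI subsetI)
  have S': "\<phi> ` S = S'" using bij by (simp add: bij_betw_def)
  fix e' assume "e' \<in> (`) \<phi> ` {e \<in> Gedges E. e \<subseteq> S}"
  then obtain p q where "e' = {\<phi> p, \<phi> q}" "(p, q) \<in> E" "p \<in> S" "q \<in> S"
    unfolding Gedges_def by auto
  moreover have "(\<phi> p, \<phi> q) \<in> E" using E calculation(2-4) by blast
  ultimately show "e' \<in> {e \<in> Gedges E. e \<subseteq> S'}" using S' unfolding Gedges_def by blast
next
  have S': "\<phi> ` S = S'" using bij by (simp add: bij_betw_def)
  fix e' assume "e' \<in> {e \<in> Gedges E. e \<subseteq> S'}"
  then obtain p q where e': "e' = {\<phi> p, \<phi> q}" and pq: "(\<phi> p, \<phi> q) \<in> E" "p \<in> S" "q \<in> S"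
    unfolding Gedges_def S'[symmetric] by auto
  have "{p, q} \<in> {e \<in> Gedges E. e \<subseteq> S}" using E pq unfolding Gedges_def by blast
  then show "e' \<in> (`) \<phi> ` {e \<in> Gedges E. e \<subseteq> S}" unfolding e' by (rule rev_image_eqI) simp
qed

lemma isoT_Umap:
  assumes Ls: "Ls \<in> XT V E n" and Ls': "Ls' \<in> XT V E n" and iso: "isoT pl P E m Ls Ls'"
  shows "isoG m' (Umap E n Ls) (Umap E n Ls')"
proof -
  obtain \<phi> where bij: "bij_betw \<phi> (hd Ls) (hd Ls')"
    and E: "\<forall>a \<in> hd Ls. \<forall>b \<in> hd Ls. (a, b) \<in> E \<longleftrightarrow> (\<phi> a, \<phi> b) \<in> E"
    and L: "map ((`) \<phi>) Ls = Ls'"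
    using iso unfolding isoT_iff by blast
  have "\<phi> ` (Ls ! k - Ls ! Suc k) = Ls' ! k - Ls' ! Suc k" if "k < n" for k
  proof -
    have "\<phi> ` (Ls ! k - Ls ! Suc k) = \<phi> ` (Ls ! k) - \<phi> ` (Ls ! Suc k)"
      using that XT_subset_hd[OF Ls, of k] XT_subset_hd[OF Ls, of "Suc k"]
        bij_betw_imp_inj_on[OF bij]
      by (intro inj_on_image_set_diff) auto
    then show ?thesis using that XT_length[OF Ls] L by auto
  qed
  then have "map ((`) \<phi>) (snd (Umap E n Ls)) = snd (Umap E n Ls')"
    by (simp add: Umap_def)
  then show ?thesis
    unfolding isoG_iff Union_Umap_parts[OF Ls] Union_Umap_parts[OF Ls']
    using bij image_Gedges_within[OF bij E] by (auto simp: Umap_def)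
qed

lemma isoT_imp_map_card_eq:
  assumes Ls: "Ls \<in> XT V E n" and iso: "isoT pl P E m Ls Ls'"
  shows "map card Ls = map card Ls'"
proof -
  obtain \<phi> where bij: "bij_betw \<phi> (hd Ls) (hd Ls')" and L: "map ((`) \<phi>) Ls = Ls'"
    using iso unfolding isoT_iff by blast
  have "card (\<phi> ` (Ls ! k)) = card (Ls ! k)" if "k \<le> n" for k
    using inj_on_subset[OF bij_betw_imp_inj_on[OF bij] XT_subset_hd[OF Ls that]]
    by (rule card_image)
  then show ?thesis
    unfolding L[symmetric] using XT_length[OF Ls] by (auto simp: list_eq_iff_nth_eq less_Suc_eq_le)
qed

lemma isoG_imp_part_cards_eq:
  assumes c: "c \<in> XG V E n" and iso: "isoG m c c'"
  shows "part_cards c = part_cards c'"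
proof -
  obtain \<phi> where bij: "bij_betw \<phi> (\<Union> (set (snd c))) (\<Union> (set (snd c')))"
    and F: "(`) \<phi> ` fst c = fst c'" and S: "map ((`) \<phi>) (snd c) = snd c'"
    using iso unfolding isoG_iff by blast
  have "card (\<phi> ` X) = card X" if "X \<in> set (snd c)" for X
    using that bij_betw_imp_inj_on[OF bij] by (intro card_image) (auto dest: inj_on_subset)
  then show ?thesis unfolding part_cards_def F[symmetric] S[symmetric] by simp
qed

lemma card_UN_parts:
  assumes c: "c \<in> XG V E n" and fin: "finite V" and J: "J \<subseteq> {..<n}"
  shows "card (\<Union>j\<in>J. snd c ! j) = (\<Sum>j\<in>J. card (snd c ! j))"
proof (rule card_UN_disjoint)
  show "finite J" using J by (rule finite_subset) simp
  show "\<forall>j\<in>J. finite (snd c ! j)"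
    using c J fin by (auto simp: mem_XG_iff intro: finite_subset[OF _ fin] dest!: nth_mem)
  show "\<forall>j\<in>J. \<forall>l\<in>J. j \<noteq> l \<longrightarrow> snd c ! j \<inter> snd c ! l = {}"
    using c J unfolding mem_XG_iff by blast
qed

lemma card_Union_parts:
  assumes c: "c \<in> XG V E n" and fin: "finite V"
  shows "card (\<Union> (set (snd c))) = sum_list (snd (part_cards c))"
  using card_UN_parts[OF c fin, of "{..<n}"] c
  by (simp add: Union_set_conv_UN_nth mem_XG_iff part_cards_def sum_list_sum_nth atLeast0LessThan)

lemma map_card_eq_if_Umap_part_cards_eq:
  assumes fin: "finite V" and Ls: "Ls \<in> XT V E n" and Ls': "Ls' \<in> XT V E n"
    and eq: "part_cards (Umap E n Ls) = part_cards (Umap E n Ls')"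
  shows "map card Ls = map card Ls'"
proof -
  have card: "card (X ! k) = (\<Sum>j\<in>{k..<n}. snd (part_cards (Umap E n X)) ! j)"
    if X: "X \<in> XT V E n" and k: "k \<le> n" for X k
  proof -
    have "{k..<n} \<subseteq> {..<n}" by auto
    from card_UN_parts[OF Umap_XG[OF X] fin this] show ?thesis
      unfolding XT_layer_eq_UN_parts[OF X k, symmetric] by (simp add: part_cards_def Umap_def)
  qed
  show ?thesis
    using card[OF Ls] card[OF Ls'] eq XT_length[OF Ls] XT_length[OF Ls']
    by (simp add: list_eq_iff_nth_eq less_Suc_eq_le)
qed

lemma part_cards_G_face:
  assumes c: "c \<in> XG V E n" and fin: "finite V" and i: "0 < i" "i < n"
  shows "part_cards (G_face n i c) =
    (fst (part_cards c), take (i - 1) (snd (part_cards c)) @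
       [snd (part_cards c) ! (i - 1) + snd (part_cards c) ! i] @ drop (Suc i) (snd (part_cards c)))"
proof -
  have "card (snd c ! (i - 1) \<union> snd c ! i) = card (snd c ! (i - 1)) + card (snd c ! i)"
    using card_UN_parts[OF c fin, of "{i - 1, i}"] i by simp
  then show ?thesis using c i by (simp add: part_cards_def G_face_conv take_map drop_map mem_XG_iff)
qed

lemma part_cards_G_degen:
  "part_cards (G_degen n j c) =
    (fst (part_cards c), take j (snd (part_cards c)) @ [0] @ drop j (snd (part_cards c)))"
  by (simp add: part_cards_def G_degen_conv take_map drop_map)

lemma pullback_sqI_inj:
  assumes g: "g ` A \<subseteq> B" and h: "h ` A \<subseteq> C" and comm: "\<And>a. a \<in> A \<Longrightarrow> k (g a) = l (h a)"
    and inj_h: "inj_on h A" and inj_k: "inj_on k B"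
    and lift: "\<And>b c. b \<in> B \<Longrightarrow> c \<in> C \<Longrightarrow> k b = l c \<Longrightarrow> c \<in> h ` A"
  shows "pullback_sq A B C g h k l"
  unfolding pullback_sq_def
proof (intro conjI ballI impI g h)
  show "k (g a) = l (h a)" if "a \<in> A" for a using comm[OF that] .
next
  fix b c assume bc: "b \<in> B" "c \<in> C" "k b = l c"
  then obtain a where a: "a \<in> A" "h a = c" using lift by blast
  have "k (g a) = k b" using comm[OF a(1)] a bc by simp
  moreover have "g a \<in> B" using g a by blast
  ultimately have "g a = b" using inj_onD[OF inj_k] bc by blast
  then show "\<exists>!a. a \<in> A \<and> g a = b \<and> h a = c"
    using a inj_h by (auto dest: inj_onD)
qed

lemma pullback_sqD:
  "pullback_sq A B C g h k l \<Longrightarrow> b \<in> B \<Longrightarrow> c \<in> C \<Longrightarrow> k b = l c \<Longrightarrow> \<exists>a\<in>A. g a = b \<and> h a = c"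
  unfolding pullback_sq_def by blast

lemma culf_inner_face_2_1:
  "culf X dX sX Y dY sY f \<Longrightarrow> pullback_sq (X 2) (X 1) (Y 2) (dX 2 1) (f 2) (f 1) (dY 2 1)"
  unfolding culf_def by (drule conjunct2, drule spec[of _ 2], drule spec[of _ 1]) simp

lemma qrep_qclass_related:
  assumes "x \<in> A" "R x x"
  shows "qrep (qclass A R x) \<in> A \<and> R x (qrep (qclass A R x))"
proof -
  have "x \<in> qclass A R x" using assms by (simp add: qclass_def)
  then have "qrep (qclass A R x) \<in> qclass A R x" unfolding qrep_def by (rule someI)
  then show ?thesis by (simp add: qclass_def)
qed

definition complete_invariant :: "'a set \<Rightarrow> ('a \<Rightarrow> 'a \<Rightarrow> bool) \<Rightarrow> ('a \<Rightarrow> 'k) \<Rightarrow> bool"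
  where "complete_invariant A R \<kappa> \<longleftrightarrow> (\<forall>x\<in>A. \<forall>y\<in>A. R x y \<longleftrightarrow> \<kappa> x = \<kappa> y)"

definition invariant_map :: "'a set \<Rightarrow> ('a \<Rightarrow> 'k) \<Rightarrow> 'b set \<Rightarrow> ('b \<Rightarrow> 'l) \<Rightarrow> ('a \<Rightarrow> 'b) \<Rightarrow> bool"
  where "invariant_map A \<kappa>A B \<kappa>B f \<longleftrightarrow>
    f ` A \<subseteq> B \<and> (\<forall>x\<in>A. \<forall>y\<in>A. \<kappa>A x = \<kappa>A y \<longrightarrow> \<kappa>B (f x) = \<kappa>B (f y))"

context
  fixes A :: "'a set" and R :: "'a \<Rightarrow> 'a \<Rightarrow> bool" and \<kappa> :: "'a \<Rightarrow> 'k"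
  assumes inv: "complete_invariant A R \<kappa>"
begin

lemma qclass_eq_iff:
  assumes "x \<in> A" "y \<in> A"
  shows "qclass A R x = qclass A R y \<longleftrightarrow> \<kappa> x = \<kappa> y"
proof
  assume "qclass A R x = qclass A R y"
  moreover have "x \<in> qclass A R x" using inv assms
    unfolding complete_invariant_def qclass_def by blast
  ultimately have "R y x" unfolding qclass_def by blast
  then show "\<kappa> x = \<kappa> y" using inv assms unfolding complete_invariant_def by simp
qed (use inv assms in \<open>auto simp: complete_invariant_def qclass_def\<close>)

lemma qrep_qclass_invariant:
  assumes "x \<in> A"
  shows "qrep (qclass A R x) \<in> A \<and> \<kappa> (qrep (qclass A R x)) = \<kappa> x"
  using qrep_qclass_related[OF assms, of R] inv assms unfolding complete_invariant_def by auto

end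

lemma qclass_map_qrep:
  assumes "complete_invariant A RA \<kappa>A" "complete_invariant B RB \<kappa>B" "invariant_map A \<kappa>A B \<kappa>B f"
    and "x \<in> A"
  shows "qclass B RB (f (qrep (qclass A RA x))) = qclass B RB (f x)"
  using assms qrep_qclass_invariant[OF assms(1,4)] qclass_eq_iff[OF assms(2)]
    unfolding invariant_map_def by blast

lemma pullback_sq_quotientI:
  assumes iA: "complete_invariant A RA \<kappa>A" and iB: "complete_invariant B RB \<kappa>B"
    and iC: "complete_invariant C RC \<kappa>C" and iD: "complete_invariant D RD \<kappa>D"
    and g: "invariant_map A \<kappa>A B \<kappa>B g" and h: "invariant_map A \<kappa>A C \<kappa>C h"
    and k: "invariant_map B \<kappa>B D \<kappa>D k" and l: "invariant_map C \<kappa>C D \<kappa>D l"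
    and comm: "\<And>a. a \<in> A \<Longrightarrow> \<kappa>D (k (g a)) = \<kappa>D (l (h a))"
    and inj_h: "\<And>a a'. a \<in> A \<Longrightarrow> a' \<in> A \<Longrightarrow> \<kappa>C (h a) = \<kappa>C (h a') \<Longrightarrow> \<kappa>A a = \<kappa>A a'"
    and inj_k: "\<And>b b'. b \<in> B \<Longrightarrow> b' \<in> B \<Longrightarrow> \<kappa>D (k b) = \<kappa>D (k b') \<Longrightarrow> \<kappa>B b = \<kappa>B b'"
    and lift: "\<And>b c. b \<in> B \<Longrightarrow> c \<in> C \<Longrightarrow> \<kappa>D (k b) = \<kappa>D (l c) \<Longrightarrow> \<exists>a\<in>A. \<kappa>C (h a) = \<kappa>C c"
  shows "pullback_sq (qclass A RA ` A) (qclass B RB ` B) (qclass C RC ` C)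
    (\<lambda>X. qclass B RB (g (qrep X))) (\<lambda>X. qclass C RC (h (qrep X)))
    (\<lambda>X. qclass D RD (k (qrep X))) (\<lambda>X. qclass D RD (l (qrep X)))"
proof (rule pullback_sqI_inj)
  have gA: "g a \<in> B" and hA: "h a \<in> C" if "a \<in> A" for a
    using g h that unfolding invariant_map_def by auto
  have kB: "k b \<in> D" if "b \<in> B" for b using k that unfolding invariant_map_def by auto
  have lC: "l c \<in> D" if "c \<in> C" for c using l that unfolding invariant_map_def by auto
  note G = qclass_map_qrep[OF iA iB g] and H = qclass_map_qrep[OF iA iC h]
    and K = qclass_map_qrep[OF iB iD k] and L = qclass_map_qrep[OF iC iD l]
  show "(\<lambda>X. qclass B RB (g (qrep X))) ` qclass A RA ` A \<subseteq> qclass B RB ` B"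
    using G gA by auto
  show "(\<lambda>X. qclass C RC (h (qrep X))) ` qclass A RA ` A \<subseteq> qclass C RC ` C"
    using H hA by auto
  show "qclass D RD (k (qrep (qclass B RB (g (qrep X))))) =
    qclass D RD (l (qrep (qclass C RC (h (qrep X)))))" if X: "X \<in> qclass A RA ` A" for X
  proof -
    obtain a where a: "a \<in> A" "X = qclass A RA a" using X by blast
    have "qclass D RD (k (g a)) = qclass D RD (l (h a))"
      using qclass_eq_iff[OF iD kB[OF gA[OF a(1)]] lC[OF hA[OF a(1)]]] comm[OF a(1)] by blast
    then show ?thesis unfolding a(2) G[OF a(1)] H[OF a(1)] K[OF gA[OF a(1)]] L[OF hA[OF a(1)]] .
  qed
  show "inj_on (\<lambda>X. qclass C RC (h (qrep X))) (qclass A RA ` A)"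
  proof (rule inj_onI)
    fix X Y assume "X \<in> qclass A RA ` A" "Y \<in> qclass A RA ` A"
      and eq: "qclass C RC (h (qrep X)) = qclass C RC (h (qrep Y))"
    then obtain a a' where a: "a \<in> A" "X = qclass A RA a" "a' \<in> A" "Y = qclass A RA a'" by blast
    then have "\<kappa>C (h a) = \<kappa>C (h a')"
      using eq H qclass_eq_iff[OF iC hA hA] by simp
    then show "X = Y" using a inj_h qclass_eq_iff[OF iA] by blast
  qed
  show "inj_on (\<lambda>X. qclass D RD (k (qrep X))) (qclass B RB ` B)"
  proof (rule inj_onI)
    fix X Y assume "X \<in> qclass B RB ` B" "Y \<in> qclass B RB ` B"
      and eq: "qclass D RD (k (qrep X)) = qclass D RD (k (qrep Y))"
    then obtain b b' where b: "b \<in> B" "X = qclass B RB b" "b' \<in> B" "Y = qclass B RB b'" by blast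
    then have "\<kappa>D (k b) = \<kappa>D (k b')"
      using eq K qclass_eq_iff[OF iD kB kB] by simp
    then show "X = Y" using b inj_k qclass_eq_iff[OF iB] by blast
  qed
next
  fix Xb Xc assume "Xb \<in> qclass B RB ` B" "Xc \<in> qclass C RC ` C"
    and eq: "qclass D RD (k (qrep Xb)) = qclass D RD (l (qrep Xc))"
  then obtain b c where bc: "b \<in> B" "Xb = qclass B RB b" "c \<in> C" "Xc = qclass C RC c" by blast
  have kb: "k b \<in> D" and lc: "l c \<in> D" using k l bc unfolding invariant_map_def by auto
  have "\<kappa>D (k b) = \<kappa>D (l c)"
    using eq qclass_map_qrep[OF iB iD k bc(1)] qclass_map_qrep[OF iC iD l bc(3)]
      qclass_eq_iff[OF iD kb lc] bc by simp
  then obtain a where a: "a \<in> A" "\<kappa>C (h a) = \<kappa>C c" using lift bc by blast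
  have "h a \<in> C" using h a(1) unfolding invariant_map_def by auto
  then have "qclass C RC (h (qrep (qclass A RA a))) = Xc"
    using qclass_map_qrep[OF iA iC h a(1)] qclass_eq_iff[OF iC] a bc by simp
  then show "Xc \<in> (\<lambda>X. qclass C RC (h (qrep X))) ` qclass A RA ` A" using a(1) by blast
qed

lemma qface_eq: "qface X R d n i = (\<lambda>C. qclass (X (n - 1)) (R (n - 1)) (d n i (qrep C)))"
  by (rule ext) (simp add: qface_def)

lemma qdegen_eq: "qdegen X R s n j = (\<lambda>C. qclass (X (Suc n)) (R (Suc n)) (s n j (qrep C)))"
  by (rule ext) (simp add: qdegen_def)

lemma qmap_eq: "qmap Y R f n = (\<lambda>C. qclass (Y n) (R n) (f n (qrep C)))"
  by (rule ext) (simp add: qmap_def)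

lemma map_card_T_face:
  "map card (T_face n i Ls) = take i (map card Ls) @ drop (Suc i) (map card Ls)"
  by (simp add: T_face_def take_map drop_map)

lemma map_card_T_degen:
  "map card (T_degen n j Ls) = take (Suc j) (map card Ls) @ drop j (map card Ls)"
  by (simp add: T_degen_def take_map drop_map)

lemma invariant_map_T_face:
  "0 < i \<Longrightarrow> i < n \<Longrightarrow> invariant_map (XT V E n) (map card) (XT V E (n - 1)) (map card) (T_face n i)"
  unfolding invariant_map_def map_card_T_face using T_face_XT by auto

lemma invariant_map_T_degen:
  "j \<le> n \<Longrightarrow> invariant_map (XT V E n) (map card) (XT V E (Suc n)) (map card) (T_degen n j)"
  unfolding invariant_map_def map_card_T_degen using T_degen_XT by auto

lemma invariant_map_G_face:
  assumes "finite V" "0 < i" "i < n"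
  shows "invariant_map (XG V E n) part_cards (XG V E (n - 1)) part_cards (G_face n i)"
  unfolding invariant_map_def
proof (intro conjI ballI impI image_subsetI)
  fix c c' assume "c \<in> XG V E n" "c' \<in> XG V E n" "part_cards c = part_cards c'"
  then show "part_cards (G_face n i c) = part_cards (G_face n i c')"
    using part_cards_G_face[OF _ assms] by simp
qed (use G_face_XG[OF _ assms(2,3)] in blast)

lemma invariant_map_G_degen:
  assumes "j \<le> n"
  shows "invariant_map (XG V E n) part_cards (XG V E (Suc n)) part_cards (G_degen n j)"
  unfolding invariant_map_def part_cards_G_degen using G_degen_XG[OF _ assms] by auto

section \<open>Trees with at most one edge\<close>

definition two_vertex_tree :: "'v set \<Rightarrow> ('v \<times> 'v) set \<Rightarrow> 'v \<Rightarrow> 'v \<Rightarrow> bool"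
  where "two_vertex_tree V E r w \<longleftrightarrow> V = {r, w} \<and> E = (if r = w then {} else {(r, w)})"

context
  fixes V :: "'v set" and r :: 'v and E :: "('v \<times> 'v) set"
  assumes tree: "rooted_tree V r E"
begin

lemma two_vertex_tree_if_card_1:
  assumes "card V = 1"
  shows "two_vertex_tree V E r r"
proof -
  have V: "V = {r}" using assms tree unfolding rooted_tree_def
    by (metis card_1_singletonE singletonD)
  have "E = {}" using tree_edge_in[OF tree] tree_no_edge_to_root[OF tree] V by fast
  then show ?thesis using V by (simp add: two_vertex_tree_def)
qed

lemma two_vertex_tree_if_card_edges_le_1:
  assumes "card E \<le> 1"
  shows "\<exists>w. two_vertex_tree V E r w"
proof (cases "E = {}")
  case True
  then have "V = {r}" using tree tree_reach_from_root[OF tree] unfolding rooted_tree_def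
    by (auto elim: rtranclE)
  then show ?thesis using True by (auto simp: two_vertex_tree_def)
next
  case False
  then obtain p w where E: "E = {(p, w)}"
    using assms card_0_eq[OF finite_tree_edges[OF tree]]
    by (auto simp: le_Suc_eq card_1_singleton_iff)
  have "(r, p) \<in> E\<^sup>*" using tree_reach_from_root[OF tree] tree_edge_in[OF tree] E by blast
  then have "p = r" using tree_acyclic[OF tree, of p] E by (auto elim: rtranclE)
  moreover have "V = {r, w}"
    using tree_reach_from_root[OF tree] tree_edge_in[OF tree] tree unfolding E rooted_tree_def
    by (auto elim: rtranclE)
  moreover have "r \<noteq> w" using tree_no_edge_to_root[OF tree] E calculation(1) by blast
  ultimately show ?thesis using E by (auto simp: two_vertex_tree_def)
qed

end

definition first_vertices :: "'v \<Rightarrow> 'v \<Rightarrow> nat \<Rightarrow> 'v set"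
  where "first_vertices r w m = (if m = 0 then {} else if m = 1 then {r} else {r, w})"

lemma card_first_vertices: "m \<le> card {r, w} \<Longrightarrow> card (first_vertices r w m) = m"
  unfolding first_vertices_def by (cases "r = w") (auto simp: numeral_2_eq_2)

lemma first_vertices_mono: "m \<le> m' \<Longrightarrow> first_vertices r w m \<subseteq> first_vertices r w m'"
  unfolding first_vertices_def by auto

lemma pair_subsets_card_eq:
  assumes "X \<subseteq> {r, w}" "Y \<subseteq> {r, w}" "card X = card Y" "X \<noteq> Y"
  shows "\<exists>a b. X = {a} \<and> Y = {b} \<and> {a, b} = {r, w} \<and> a \<noteq> b"
proof -
  have "X = {} \<or> X = {r} \<or> X = {w} \<or> X = {r, w}" "Y = {} \<or> Y = {r} \<or> Y = {w} \<or> Y = {r, w}"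
    using assms(1,2) by blast+
  then show ?thesis using assms(3,4) by (elim disjE) (auto simp: card_insert_if split: if_splits)
qed

lemma transpose_image_singleton_subset:
  assumes "X \<subseteq> {a}" "Y \<subseteq> {b}" "card X = card Y" "{a, b} = {r, w}"
  shows "Transposition.transpose r w ` X = Y"
proof -
  have "X = {} \<and> Y = {} \<or> X = {a} \<and> Y = {b}"
    using assms(1-3) by (auto simp: subset_singleton_iff)
  moreover have "Transposition.transpose r w a = b"
    using assms(4) by (auto simp: doubleton_eq_iff transpose_def)
  ultimately show ?thesis by auto
qed

context
  fixes V :: "'v set" and E :: "('v \<times> 'v) set" and r w :: 'v
  assumes two: "two_vertex_tree V E r w"
begin

lemma two_vertex_V: "V = {r, w}"
  using two by (simp add: two_vertex_tree_def)

lemma two_vertex_finite: "finite V"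
  using two_vertex_V by simp

lemma two_vertex_no_loop: "(v, v) \<notin> E"
  using two by (simp add: two_vertex_tree_def)

lemma two_vertex_Gedges: "Gedges E = (if r = w then {} else {{r, w}})"
  using two unfolding two_vertex_tree_def Gedges_def by (cases "r = w") simp_all

lemma lower_two_vertex_iff: "lower E S L \<longleftrightarrow> L \<subseteq> S \<and> (r \<noteq> w \<and> r \<in> S \<and> w \<in> L \<longrightarrow> r \<in> L)"
proof -
  have E: "E \<inter> S \<times> S = (if r \<noteq> w \<and> r \<in> S \<and> w \<in> S then {(r, w)} else {})"
    using two by (auto simp: two_vertex_tree_def)
  have path: "v = u \<or> (v = r \<and> u = w \<and> r \<noteq> w \<and> r \<in> S \<and> w \<in> S)"
    if "(v, u) \<in> (E \<inter> S \<times> S)\<^sup>*" for u v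
    using that unfolding E by (induction rule: rtrancl_induct) (auto split: if_splits)
  show ?thesis
  proof
    assume "lower E S L"
    moreover have "(r, w) \<in> (E \<inter> S \<times> S)\<^sup>*" if "r \<noteq> w" "r \<in> S" "w \<in> S"
      unfolding E using that by (simp add: r_into_rtrancl)
    ultimately show "L \<subseteq> S \<and> (r \<noteq> w \<and> r \<in> S \<and> w \<in> L \<longrightarrow> r \<in> L)"
      unfolding lower_def by blast
  next
    assume "L \<subseteq> S \<and> (r \<noteq> w \<and> r \<in> S \<and> w \<in> L \<longrightarrow> r \<in> L)"
    then show "lower E S L" unfolding lower_def using path by blast
  qed
qed

lemma admissible_first_vertices: "admissible V E (first_vertices r w m)"
proof -
  have "lower E V (first_vertices r w m)"
    unfolding lower_two_vertex_iff two_vertex_V first_vertices_def by auto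
  then show ?thesis using admissible_diff_lower[OF _ lower_empty] by fastforce
qed

lemma lower_first_vertices: "m \<le> m' \<Longrightarrow> lower E (first_vertices r w m') (first_vertices r w m)"
  unfolding lower_two_vertex_iff first_vertices_def by auto

lemma edges_within_nonempty_iff: "X \<subseteq> V \<Longrightarrow> {e \<in> Gedges E. e \<subseteq> X} \<noteq> {} \<longleftrightarrow> card X = 2"
proof -
  assume "X \<subseteq> V"
  then have "X = {} \<or> X = {r} \<or> X = {w} \<or> X = {r, w}" using two_vertex_V by blast
  then show ?thesis using two_vertex_Gedges by (cases "r = w") (auto simp: card_insert_if)
qed

lemma part_cards_Umap:
  assumes Ls: "Ls \<in> XT V E n"
  shows "part_cards (Umap E n Ls) =
    (card (hd Ls) = 2, map (\<lambda>k. card (Ls ! k) - card (Ls ! Suc k)) [0..<n])"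
proof -
  have "card (Ls ! k - Ls ! Suc k) = card (Ls ! k) - card (Ls ! Suc k)" if "k < n" for k
    using XT_antimono[OF Ls, of k "Suc k"] XT_subset[OF Ls, of "Suc k"] two_vertex_V that
    by (intro card_Diff_subset) (auto intro: finite_subset)
  then show ?thesis
    using edges_within_nonempty_iff[OF admissible_subset[OF XT_admissible[OF Ls]]]
    by (simp add: part_cards_def Umap_def)
qed

text \<open>Equal cardinalities force equal layerings on the same vertex set, since lower sets of
  a subforest of the two-vertex tree are determined by their size; otherwise the two layerings
  live on the singletons {r} and {w} and the transposition of r and w matches them.\<close>

lemma isoT_if_map_card_eq:
  assumes Ls: "Ls \<in> XT V E n" and Ls': "Ls' \<in> XT V E n" and eq: "map card Ls = map card Ls'"
  shows "isoT pl P E m Ls Ls'"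
proof -
  have len: "length Ls = Suc n" "length Ls' = Suc n" using XT_length Ls Ls' by blast+
  have card: "card (Ls ! k) = card (Ls' ! k)" if "k \<le> n" for k
    using eq len that by (metis le_imp_less_Suc nth_map)
  have hd: "hd Ls \<subseteq> {r, w}" "hd Ls' \<subseteq> {r, w}"
    using admissible_subset[OF XT_admissible] Ls Ls' two_vertex_V by blast+
  show ?thesis
  proof (cases "hd Ls = hd Ls'")
    case True
    have "Ls ! k = Ls' ! k" if k: "k \<le> n" for k
    proof (rule ccontr)
      assume "Ls ! k \<noteq> Ls' ! k"
      then obtain a b where ab: "Ls ! k = {a}" "Ls' ! k = {b}" "{a, b} = {r, w}" "a \<noteq> b"
        using pair_subsets_card_eq[of "Ls ! k" r w "Ls' ! k"] XT_subset_hd[OF Ls k]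
          XT_subset_hd[OF Ls' k] hd card[OF k] by blast
      have "r \<in> hd Ls"
        using ab XT_subset_hd[OF Ls k] XT_subset_hd[OF Ls' k] True by auto
      then show False
        using ab XT_lower[OF Ls k] XT_lower[OF Ls' k] True
        unfolding lower_two_vertex_iff by (auto simp: doubleton_eq_iff)
    qed
    then have "Ls = Ls'" using len by (simp add: list_eq_iff_nth_eq less_Suc_eq_le)
    then show ?thesis using isoT_refl by blast
  next
    case False
    then obtain a b where ab: "hd Ls = {a}" "hd Ls' = {b}" "{a, b} = {r, w}" "a \<noteq> b"
      using pair_subsets_card_eq[OF hd] card[of 0] XT_nth_0[OF Ls] XT_nth_0[OF Ls'] by auto
    have "Transposition.transpose r w ` (Ls ! k) = Ls' ! k" if "k \<le> n" for k
      using transpose_image_singleton_subset[OF _ _ card[OF that] ab(3)] XT_subset_hd[OF Ls that]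
        XT_subset_hd[OF Ls' that] ab by simp
    then have "map ((`) (Transposition.transpose r w)) Ls = Ls'"
      using len by (simp add: list_eq_iff_nth_eq less_Suc_eq_le)
    moreover have "bij_betw (Transposition.transpose r w) (hd Ls) (hd Ls')"
      using calculation len by (cases Ls; cases Ls') (auto simp: bij_betw_def)
    ultimately show ?thesis
      unfolding isoT_iff by (intro exI[of _ "Transposition.transpose r w"])
        (simp add: ab two_vertex_no_loop)
  qed
qed

lemma isoG_if_part_cards_eq:
  assumes c: "c \<in> XG V E n" and c': "c' \<in> XG V E n" and eq: "part_cards c = part_cards c'"
  shows "isoG m c c'"
proof -
  let ?\<tau> = "Transposition.transpose r w"
  have len: "length (snd c) = n" "length (snd c') = n" using XG_length c c' by blast+
  have cards: "map card (snd c) = map card (snd c')" using eq by (simp add: part_cards_def)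
  have card: "card (snd c ! k) = card (snd c' ! k)" if "k < n" for k
    using arg_cong[OF cards, of "\<lambda>xs. xs ! k"] len that by simp
  have sub: "snd c ! k \<subseteq> {r, w}" "snd c' ! k \<subseteq> {r, w}" if "k < n" for k
    using XG_part_subset[OF c that] XG_part_subset[OF c' that] two_vertex_V by simp_all
  have "fst c \<subseteq> Gedges E" "fst c' \<subseteq> Gedges E" using c c' by (auto simp: mem_XG_iff)
  then have edges: "fst c \<subseteq> {{r, w}}" "fst c' \<subseteq> {{r, w}}"
    using two_vertex_Gedges by (auto split: if_splits)
  moreover have "fst c = {} \<longleftrightarrow> fst c' = {}" using eq by (simp add: part_cards_def)
  ultimately have F: "fst c = fst c'" by (auto simp: subset_singleton_iff)
  show ?thesis
  proof (cases "snd c = snd c'")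
    case True
    then have "c = c'" using F by (simp add: prod_eq_iff)
    then show ?thesis using isoG_refl by blast
  next
    case False
    then obtain k0 where k0: "k0 < n" "snd c ! k0 \<noteq> snd c' ! k0"
      using len by (auto simp: list_eq_iff_nth_eq)
    then obtain a b where ab: "snd c ! k0 = {a}" "snd c' ! k0 = {b}" "{a, b} = {r, w}" "a \<noteq> b"
      using pair_subsets_card_eq[OF sub[OF k0(1)] card[OF k0(1)] k0(2)] by blast
    have "?\<tau> ` (snd c ! k) = snd c' ! k" if k: "k < n" for k
    proof (cases "k = k0")
      case True
      then show ?thesis
        by (intro transpose_image_singleton_subset[OF _ _ card[OF k] ab(3)]) (use ab in auto)
    next
      case False
      then have "snd c ! k \<inter> snd c ! k0 = {}" "snd c' ! k \<inter> snd c' ! k0 = {}"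
        using XG_disjointD[OF c k k0(1)] XG_disjointD[OF c' k k0(1)] by blast+
      then have "snd c ! k \<subseteq> {b}" "snd c' ! k \<subseteq> {a}" using sub[OF k] ab by auto
      moreover have "{b, a} = {r, w}" using ab(3) by (simp add: insert_commute)
      ultimately show ?thesis by (intro transpose_image_singleton_subset[OF _ _ card[OF k]])
    qed
    then have parts: "map ((`) ?\<tau>) (snd c) = snd c'" using len by (simp add: list_eq_iff_nth_eq)
    have "?\<tau> ` \<Union> (set (snd c)) = \<Union> (set (snd c'))"
      unfolding parts[symmetric] set_map image_Union ..
    then have "bij_betw ?\<tau> (\<Union> (set (snd c))) (\<Union> (set (snd c')))"
      by (simp add: bij_betw_def inj_on_transpose)
    moreover have "(`) ?\<tau> ` fst c = fst c'"
      using edges F by (auto simp: subset_singleton_iff insert_commute)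
    ultimately show ?thesis unfolding isoG_iff using parts by blast
  qed
qed

lemma exists_XT_with_part_cards:
  assumes c: "c \<in> XG V E n" and edge: "fst c \<noteq> {} \<longleftrightarrow> card (\<Union> (set (snd c))) = 2"
  shows "\<exists>a\<in>XT V E n. part_cards (Umap E n a) = part_cards c"
proof -
  define U where "U k = (\<Union>j\<in>{k..<n}. snd c ! j)" for k
  define a where "a = map (\<lambda>k. first_vertices r w (card (U k))) [0..<Suc n]"
  have len: "length (snd c) = n" using c by (rule XG_length)
  have UV: "U k \<subseteq> V" for k
    unfolding U_def by (rule UN_least) (use XG_part_subset[OF c] in auto)
  have finU: "finite (U k)" for k using UV two_vertex_finite by (rule finite_subset)
  have cardU: "card (U k) \<le> card {r, w}" for k using UV two_vertex_V by (auto intro: card_mono)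
  have U_mono: "card (U l) \<le> card (U k)" if "k \<le> l" for k l
  proof (rule card_mono[OF finU])
    show "U l \<subseteq> U k" unfolding U_def using that by (intro UN_mono) auto
  qed
  have card_U: "card (U k) = (\<Sum>j\<in>{k..<n}. card (snd c ! j))" for k
    unfolding U_def by (rule card_UN_parts[OF c]) (auto simp: two_vertex_V)
  have a_nth: "a ! k = first_vertices r w (card (U k))" if "k \<le> n" for k
    using that unfolding a_def by (simp del: upt_Suc add: nth_map_upt)
  have card_a: "card (a ! k) = card (U k)" if "k \<le> n" for k
    using a_nth[OF that] card_first_vertices[OF cardU[of k]] by simp
  have a: "a \<in> XT V E n"
  proof (rule XT_I)
    show "length a = Suc n" by (simp add: a_def)
    show "admissible V E (a ! 0)" using a_nth[of 0] admissible_first_vertices by simp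
    show "lower E (a ! 0) (a ! k)" if "k \<le> n" for k
      using a_nth[OF that] a_nth[of 0] lower_first_vertices U_mono[of 0 k] by simp
    show "a ! Suc k \<subseteq> a ! k" if "k < n" for k
      using a_nth[of k] a_nth[of "Suc k"] that first_vertices_mono U_mono[of k "Suc k"] by simp
    show "a ! n = {}" using a_nth[of n] by (simp add: U_def first_vertices_def)
  qed
  have "card (a ! k) - card (a ! Suc k) = card (snd c ! k)" if "k < n" for k
    using card_a[of k] card_a[of "Suc k"] card_U[of k] card_U[of "Suc k"] that
    by (simp add: sum.atLeast_Suc_lessThan)
  then have "map (\<lambda>k. card (a ! k) - card (a ! Suc k)) [0..<n] = map card (snd c)"
    using len by (simp add: list_eq_iff_nth_eq)
  moreover have "card (hd a) = card (\<Union> (set (snd c)))"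
    using card_a[of 0] XT_nth_0[OF a] len
    by (simp add: U_def Union_set_conv_UN_nth atLeast0LessThan)
  ultimately show ?thesis using a part_cards_Umap[OF a] edge by (auto simp: part_cards_def)
qed

lemma complete_invariant_XT: "complete_invariant (XT V E n) (isoT pl P E n) (map card)"
  unfolding complete_invariant_def using isoT_imp_map_card_eq isoT_if_map_card_eq by blast

lemma complete_invariant_XG: "complete_invariant (XG V E n) (isoG n) part_cards"
  unfolding complete_invariant_def using isoG_imp_part_cards_eq isoG_if_part_cards_eq by blast

lemma invariant_map_Umap: "invariant_map (XT V E n) (map card) (XG V E n) part_cards (Umap E n)"
  unfolding invariant_map_def
proof (intro conjI ballI impI subsetI)
  show "x \<in> XG V E n" if "x \<in> Umap E n ` XT V E n" for x using that Umap_XG by blast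
next
  fix Ls Ls' assume Ls: "Ls \<in> XT V E n" and Ls': "Ls' \<in> XT V E n"
    and eq: "map card Ls = map card Ls'"
  have "card (Ls ! k) = card (Ls' ! k)" if "k \<le> n" for k
    using arg_cong[OF eq, of "\<lambda>xs. xs ! k"] that XT_length[OF Ls] XT_length[OF Ls'] by simp
  then show "part_cards (Umap E n Ls) = part_cards (Umap E n Ls')"
    unfolding part_cards_Umap[OF Ls] part_cards_Umap[OF Ls'] XT_nth_0[OF Ls, symmetric]
      XT_nth_0[OF Ls', symmetric] by simp
qed

lemma exists_XT_with_part_cards_over:
  assumes b: "b \<in> XT V E m" and c: "c \<in> XG V E n" and d: "d \<in> XG V E m"
    and eq: "part_cards (Umap E m b) = part_cards d"
    and fst_d: "fst d = fst c" and Union_d: "\<Union> (set (snd d)) = \<Union> (set (snd c))"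
  shows "\<exists>a\<in>XT V E n. part_cards (Umap E n a) = part_cards c"
proof (rule exists_XT_with_part_cards[OF c])
  have "card (hd b) = card (\<Union> (set (snd c)))"
    using card_Union_parts[OF Umap_XG[OF b] two_vertex_finite]
      card_Union_parts[OF d two_vertex_finite] eq
    unfolding Union_Umap_parts[OF b] Union_d by simp
  moreover have "fst c \<noteq> {} \<longleftrightarrow> card (hd b) = 2"
    using eq fst_d edges_within_nonempty_iff[OF admissible_subset[OF XT_admissible[OF b]]]
    by (simp add: part_cards_def Umap_def)
  ultimately show "fst c \<noteq> {} \<longleftrightarrow> card (\<Union> (set (snd c))) = 2" by simp
qed

lemma pullback_sq_qdegen_two_vertex:
  assumes j: "j \<le> n"
  shows "pullback_sq (qlevels (XT V E) (isoT pl P E) n) (qlevels (XT V E) (isoT pl P E) (Suc n))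
    (qlevels (XG V E) isoG n) (qdegen (XT V E) (isoT pl P E) T_degen n j)
    (qmap (XG V E) isoG (Umap E) n) (qmap (XG V E) isoG (Umap E) (Suc n))
      (qdegen (XG V E) isoG G_degen n j)"
  unfolding qlevels_def qdegen_eq qmap_eq
proof (rule pullback_sq_quotientI[OF complete_invariant_XT complete_invariant_XT
      complete_invariant_XG complete_invariant_XG invariant_map_T_degen[OF j]
      invariant_map_Umap invariant_map_Umap invariant_map_G_degen[OF j]
      _ map_card_eq_if_Umap_part_cards_eq[OF two_vertex_finite]
        map_card_eq_if_Umap_part_cards_eq[OF two_vertex_finite]])
  show "part_cards (Umap E (Suc n) (T_degen n j a)) = part_cards (G_degen n j (Umap E n a))"
    if "a \<in> XT V E n" for a
    using Umap_T_degen[OF XT_length[OF that] j] by simp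
  show "\<exists>a\<in>XT V E n. part_cards (Umap E n a) = part_cards c"
    if "b \<in> XT V E (Suc n)" "c \<in> XG V E n"
      "part_cards (Umap E (Suc n) b) = part_cards (G_degen n j c)"
    for b c
    using exists_XT_with_part_cards_over[OF that(1,2) G_degen_XG[OF that(2) j] that(3) _
        Union_G_degen]
    by (simp add: G_degen_conv)
qed

lemma pullback_sq_qface_two_vertex:
  assumes i: "0 < i" "i < n"
  shows "pullback_sq (qlevels (XT V E) (isoT pl P E) n) (qlevels (XT V E) (isoT pl P E) (n - 1))
    (qlevels (XG V E) isoG n) (qface (XT V E) (isoT pl P E) T_face n i)
    (qmap (XG V E) isoG (Umap E) n) (qmap (XG V E) isoG (Umap E) (n - 1))
      (qface (XG V E) isoG G_face n i)"
  unfolding qlevels_def qface_eq qmap_eq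
proof (rule pullback_sq_quotientI[OF complete_invariant_XT complete_invariant_XT
      complete_invariant_XG complete_invariant_XG invariant_map_T_face[OF i]
      invariant_map_Umap invariant_map_Umap invariant_map_G_face[OF _ i]
      _ map_card_eq_if_Umap_part_cards_eq[OF two_vertex_finite]
        map_card_eq_if_Umap_part_cards_eq[OF two_vertex_finite]])
  show "finite V" by (rule two_vertex_finite)
  show "part_cards (Umap E (n - 1) (T_face n i a)) = part_cards (G_face n i (Umap E n a))"
    if "a \<in> XT V E n" for a
    using Umap_T_face[OF that i] by simp
  show "\<exists>a\<in>XT V E n. part_cards (Umap E n a) = part_cards c"
    if "b \<in> XT V E (n - 1)" "c \<in> XG V E n"
      "part_cards (Umap E (n - 1) b) = part_cards (G_face n i c)"
    for b c
    using exists_XT_with_part_cards_over[OF that(1,2) G_face_XG[OF that(2) i] that(3) _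
      Union_G_face_XG[OF that(2) i]]
    by (simp add: G_face_conv)
qed

lemma U_culf_unlabelled_two_vertex: "U_culf_unlabelled pl P V E"
  unfolding U_culf_unlabelled_def culf_def
  by (blast intro: pullback_sq_qdegen_two_vertex pullback_sq_qface_two_vertex)

lemma part_cards_inj_on_XG:
  assumes "r = w"
  shows "inj_on part_cards (XG V E n)"
proof
  fix c c' assume c: "c \<in> XG V E n" and c': "c' \<in> XG V E n" and eq: "part_cards c = part_cards c'"
  have "fst c = {}" "fst c' = {}" using c c' two_vertex_Gedges assms by (auto simp: mem_XG_iff)
  moreover have "snd c = snd c'"
  proof (rule nth_equalityI)
    have cards: "map card (snd c) = map card (snd c')" using eq by (simp add: part_cards_def)
    then show len: "length (snd c) = length (snd c')" by (metis length_map)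
    fix k assume k: "k < length (snd c)"
    then have "snd c ! k \<subseteq> {r}" "snd c' ! k \<subseteq> {r}"
      using XG_part_subset[OF c] XG_part_subset[OF c'] c len two_vertex_V assms
      by (auto simp: mem_XG_iff)
    moreover have "card (snd c ! k) = card (snd c' ! k)"
      using arg_cong[OF cards, of "\<lambda>xs. xs ! k"] k len by simp
    ultimately show "snd c ! k = snd c' ! k" by (auto simp: subset_singleton_iff)
  qed
  ultimately show "c = c'" by (simp add: prod_eq_iff)
qed

lemma U_culf_labelled_one_vertex:
  assumes "r = w"
  shows "U_culf_labelled V E"
proof -
  have lift: "c \<in> Umap E n ` XT V E n"
    if bcd: "b \<in> XT V E m" "c \<in> XG V E n" "d \<in> XG V E m" "Umap E m b = d" "fst d = fst c"
      "\<Union> (set (snd d)) = \<Union> (set (snd c))" for b c d m n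
  proof -
    obtain a where a: "a \<in> XT V E n" "part_cards (Umap E n a) = part_cards c"
      using exists_XT_with_part_cards_over[OF bcd(1-3) _ bcd(5,6)] bcd(4) by blast
    then have "Umap E n a = c"
      using inj_onD[OF part_cards_inj_on_XG[OF assms]] Umap_XG bcd(2) by blast
    then show ?thesis using a(1) by blast
  qed
  show ?thesis
    unfolding U_culf_labelled_def culf_def
  proof (intro conjI allI impI)
    fix n j :: nat assume j: "j \<le> n"
    show "pullback_sq (XT V E n) (XT V E (Suc n)) (XG V E n) (T_degen n j) (Umap E n)
      (Umap E (Suc n)) (G_degen n j)"
    proof (rule pullback_sqI_inj[OF _ _ _ inj_on_Umap inj_on_Umap])
      show "T_degen n j ` XT V E n \<subseteq> XT V E (Suc n)" using T_degen_XT j by blast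
      show "Umap E n ` XT V E n \<subseteq> XG V E n" using Umap_XG by blast
      show "Umap E (Suc n) (T_degen n j a) = G_degen n j (Umap E n a)" if "a \<in> XT V E n" for a
        using Umap_T_degen[OF XT_length[OF that] j] .
      show "c \<in> Umap E n ` XT V E n"
        if "b \<in> XT V E (Suc n)" "c \<in> XG V E n" "Umap E (Suc n) b = G_degen n j c" for b c
        using lift[OF that(1,2) G_degen_XG[OF that(2) j] that(3) _ Union_G_degen]
        by (simp add: G_degen_conv)
    qed
  next
    fix n i :: nat assume i: "0 < i \<and> i < n"
    show "pullback_sq (XT V E n) (XT V E (n - 1)) (XG V E n) (T_face n i) (Umap E n)
      (Umap E (n - 1)) (G_face n i)"
    proof (rule pullback_sqI_inj[OF _ _ _ inj_on_Umap inj_on_Umap])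
      show "T_face n i ` XT V E n \<subseteq> XT V E (n - 1)" using T_face_XT i by blast
      show "Umap E n ` XT V E n \<subseteq> XG V E n" using Umap_XG by blast
      show "Umap E (n - 1) (T_face n i a) = G_face n i (Umap E n a)" if "a \<in> XT V E n" for a
        using Umap_T_face[OF that] i by blast
      show "c \<in> Umap E n ` XT V E n"
        if "b \<in> XT V E (n - 1)" "c \<in> XG V E n" "Umap E (n - 1) b = G_face n i c" for b c
        using lift[OF that(1,2) G_face_XG[OF that(2)] that(3) _ Union_G_face_XG[OF that(2)]] i
        by (simp add: G_face_conv)
    qed
  qed
qed

end

section \<open>Obstructions\<close>

context
  fixes V :: "'v set" and r :: 'v and E :: "('v \<times> 'v) set"
  assumes tree: "rooted_tree V r E"
begin

lemma card_vertices_eq_1_iff: "card V = 1 \<longleftrightarrow> E = {}"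
proof
  assume "E = {}"
  then have "V = {r}" using tree tree_reach_from_root[OF tree] unfolding rooted_tree_def
    by (auto elim: rtranclE)
  then show "card V = 1" by simp
qed (use two_vertex_tree_if_card_1[OF tree] in \<open>simp add: two_vertex_tree_def\<close>)

lemma Umap_two_layers: "a \<in> XT V E 2 \<Longrightarrow> snd (Umap E 2 a) = [a ! 0 - a ! 1, a ! 1]"
  using XT_last[of a V E 2] by (simp add: Umap_def numeral_2_eq_2)

lemma not_U_culf_labelled_if_edge:
  assumes pc: "(p, c) \<in> E"
  shows "\<not> U_culf_labelled V E"
proof
  assume "U_culf_labelled V E"
  then have pb: "pullback_sq (XT V E 2) (XT V E 1) (XG V E 2) (T_face 2 1) (Umap E 2)
    (Umap E 1) (G_face 2 1)"
    unfolding U_culf_labelled_def by (rule culf_inner_face_2_1)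
  have "p \<noteq> c" using pc tree_acyclic[OF tree, of p] by auto
  have b: "[{p, c}, {}] \<in> XT V E 1"
    by (rule XT_I)
      (use admissible_edge[OF tree pc] lower_refl lower_empty
        in \<open>auto simp: less_Suc_eq_le le_Suc_eq\<close>)
  let ?G = "({e \<in> Gedges E. e \<subseteq> {p, c}}, [{p}, {c}])"
  have G: "?G \<in> XG V E 2"
    using \<open>p \<noteq> c\<close> tree_edge_in[OF tree pc] by (auto simp: XG_def numeral_2_eq_2 less_Suc_eq)
  have "Umap E 1 [{p, c}, {}] = G_face 2 1 ?G" by (auto simp: Umap_def G_face_def)
  then obtain a where a: "a \<in> XT V E 2" "Umap E 2 a = ?G" using pullback_sqD[OF pb b G] by blast
  then have "a ! 1 = {c}" "a ! 0 - a ! 1 = {p}" using Umap_two_layers[OF a(1)] by auto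
  then have "hd a = {p, c}" "a ! 1 = {c}"
    using XT_nth_0[OF a(1)] XT_antimono[OF a(1), of 0 1] by auto
  moreover have "lower E (hd a) (a ! 1)" using XT_lower[OF a(1), of 1] by simp
  ultimately show False
    using pc \<open>p \<noteq> c\<close> unfolding lower_def
    by (metis Int_iff SigmaI insertCI r_into_rtrancl singletonD)
qed

lemma no_XT_over_path:
  assumes a: "a \<in> XT V E 2" and iso: "isoG m (Umap E 2 a) (F, [{x}, {y, z}])"
    and xy: "{x, y} \<in> F" and xz: "{x, z} \<in> F" and yz: "y \<noteq> z"
  shows False
proof -
  obtain \<phi> where bij0: "bij_betw \<phi> (\<Union> (set (snd (Umap E 2 a)))) (\<Union> (set [{x}, {y, z}]))"
    and F0: "(`) \<phi> ` fst (Umap E 2 a) = F"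
    and parts0: "map ((`) \<phi>) (snd (Umap E 2 a)) = [{x}, {y, z}]"
    using iso unfolding isoG_iff by auto
  have "\<Union> (set [{x}, {y, z}]) = {x, y, z}" by auto
  then have bij: "bij_betw \<phi> (hd a) {x, y, z}" using bij0 unfolding Union_Umap_parts[OF a] by simp
  have F: "(`) \<phi> ` {e \<in> Gedges E. e \<subseteq> hd a} = F" using F0 by (simp add: Umap_def)
  have parts: "\<phi> ` (a ! 0 - a ! 1) = {x}" "\<phi> ` (a ! 1) = {y, z}"
    using parts0 unfolding Umap_two_layers[OF a] by simp_all
  have inj: "inj_on \<phi> (hd a)" using bij by (rule bij_betw_imp_inj_on)
  have sub: "a ! 1 \<subseteq> hd a" using XT_subset_hd[OF a, of 1] by simp
  have low: "lower E (hd a) (a ! 1)" using XT_lower[OF a, of 1] by simp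
  have "x \<in> \<phi> ` (a ! 0 - a ! 1)" using parts(1) by simp
  then obtain x' where x': "x' \<in> hd a" "x' \<notin> a ! 1" "\<phi> x' = x"
    using XT_nth_0[OF a] by force
  have parent: "\<exists>t'. t' \<in> a ! 1 \<and> \<phi> t' = t \<and> (t', x') \<in> E" if t: "t \<in> {y, z}" "{x, t} \<in> F" for t
  proof -
    have "t \<in> \<phi> ` (a ! 1)" using t(1) parts(2) by simp
    then obtain t' where t': "t' \<in> a ! 1" "\<phi> t' = t" by force
    obtain e where e: "e \<in> Gedges E" "e \<subseteq> hd a" "\<phi> ` e = {x, t}" using t(2) F by auto
    then obtain p q where pq: "e = {p, q}" "(p, q) \<in> E" unfolding Gedges_def by blast
    have "\<phi> ` {p, q} = \<phi> ` {x', t'}" using e pq x' t' by simp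
    moreover have "{p, q} \<subseteq> hd a" "{x', t'} \<subseteq> hd a" using e(2) pq(1) x'(1) t'(1) sub by auto
    ultimately have "{p, q} = {x', t'}" using inj_on_image_eq_iff[OF inj] by blast
    moreover have "(x', t') \<notin> E"
    proof
      assume "(x', t') \<in> E"
      then have "(x', t') \<in> (E \<inter> hd a \<times> hd a)\<^sup>*" using x'(1) t'(1) sub
        by (intro r_into_rtrancl) auto
      then show False using low t'(1) x'(2) unfolding lower_def by blast
    qed
    ultimately have "(t', x') \<in> E" using pq x'(2) t'(1) by (auto simp: doubleton_eq_iff)
    then show ?thesis using t' by blast
  qed
  obtain y' z' where "\<phi> y' = y" "(y', x') \<in> E" "\<phi> z' = z" "(z', x') \<in> E"
    using parent[of y] parent[of z] xy xz by blast
  then show False using tree_parent_unique[OF tree, of y' x' z'] yz by auto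
qed

lemma not_U_culf_unlabelled_if_path:
  assumes adm: "admissible V E {x, y, z}" and xy: "{x, y} \<in> Gedges E" and xz: "{x, z} \<in> Gedges E"
    and d: "x \<noteq> y" "x \<noteq> z" "y \<noteq> z"
  shows "\<not> U_culf_unlabelled pl P V E"
proof
  assume "U_culf_unlabelled pl P V E"
  then have pb: "pullback_sq (qlevels (XT V E) (isoT pl P E) 2) (qlevels (XT V E) (isoT pl P E) 1)
    (qlevels (XG V E) isoG 2) (qface (XT V E) (isoT pl P E) T_face 2 1)
    (qmap (XG V E) isoG (Umap E) 2) (qmap (XG V E) isoG (Umap E) 1)
      (qface (XG V E) isoG G_face 2 1)"
    unfolding U_culf_unlabelled_def by (rule culf_inner_face_2_1)
  let ?F = "{e \<in> Gedges E. e \<subseteq> \<Union> (set [{x}, {y, z}])}"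
  let ?b = "[{x, y, z}, {}]" and ?c = "(?F, [{x}, {y, z}])"
  have b: "?b \<in> XT V E 1"
    by (rule XT_I) (use adm lower_refl lower_empty in \<open>auto simp: less_Suc_eq_le le_Suc_eq\<close>)
  have c: "?c \<in> XG V E 2"
    unfolding mem_XG_iff
  proof (intro conjI)
    show "\<forall>k<2. \<forall>l<2. k \<noteq> l \<longrightarrow> snd ?c ! k \<inter> snd ?c ! l = {}"
      using d by (simp add: numeral_2_eq_2 less_Suc_eq)
    show "\<Union> (set (snd ?c)) \<subseteq> V" using admissible_subset[OF adm] by simp
    show "fst ?c \<subseteq> {e \<in> Gedges E. e \<subseteq> \<Union> (set (snd ?c))}"
      unfolding fst_conv snd_conv by (rule subset_refl)
  qed simp
  define B where "B = qclass (XT V E 1) (isoT pl P E 1) ?b"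
  define C where "C = qclass (XG V E 2) (isoG 2) ?c"
  have b': "qrep B \<in> XT V E 1" "isoT pl P E 1 ?b (qrep B)"
    using qrep_qclass_related[of ?b "XT V E 1" "isoT pl P E 1", OF b isoT_refl]
      unfolding B_def by auto
  have c': "qrep C \<in> XG V E 2" "isoG 2 ?c (qrep C)"
    using qrep_qclass_related[of ?c "XG V E 2" "isoG 2", OF c isoG_refl] unfolding C_def by auto
  have "G_face 2 1 ?c \<in> XG V E 1" "G_face 2 1 (qrep C) \<in> XG V E 1"
    using G_face_XG[OF c, of 1] G_face_XG[OF c'(1), of 1] by simp_all
  moreover have "isoG 1 (G_face 2 1 ?c) (G_face 2 1 (qrep C))"
    by (rule isoG_G_face[OF c'(2)]) simp_all
  ultimately have face_class: "qclass (XG V E 1) (isoG 1) (G_face 2 1 ?c) =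
    qclass (XG V E 1) (isoG 1) (G_face 2 1 (qrep C))"
    by (rule qclass_isoG_eq)
  have "qmap (XG V E) isoG (Umap E) 1 B = qclass (XG V E 1) (isoG 1) (Umap E 1 (qrep B))"
    by (simp add: qmap_def)
  also have "\<dots> = qclass (XG V E 1) (isoG 1) (Umap E 1 ?b)"
    by (rule qclass_isoG_eq[OF Umap_XG[OF b] Umap_XG[OF b'(1)] isoT_Umap[OF b b'(1,2)], symmetric])
  also have "Umap E 1 ?b = G_face 2 1 ?c" by (auto simp: Umap_def G_face_def)
  also note face_class
  also have "qclass (XG V E 1) (isoG 1) (G_face 2 1 (qrep C)) = qface (XG V E) isoG G_face 2 1 C"
    by (simp add: qface_def)
  finally have "qmap (XG V E) isoG (Umap E) 1 B = qface (XG V E) isoG G_face 2 1 C" .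
  moreover have "B \<in> qlevels (XT V E) (isoT pl P E) 1"
    unfolding B_def qlevels_def using b by (rule imageI)
  moreover have "C \<in> qlevels (XG V E) isoG 2"
    unfolding C_def qlevels_def using c by (rule imageI)
  ultimately obtain X where X: "X \<in> qlevels (XT V E) (isoT pl P E) 2"
    "qmap (XG V E) isoG (Umap E) 2 X = C"
    using pullback_sqD[OF pb] by blast
  then obtain a where "a \<in> XT V E 2" "X = qclass (XT V E 2) (isoT pl P E 2) a"
    unfolding qlevels_def by blast
  then have a: "qrep X \<in> XT V E 2"
    using qrep_qclass_related[of a "XT V E 2" "isoT pl P E 2", OF _ isoT_refl] by blast
  have "?c \<in> C" unfolding C_def qclass_def using c isoG_refl by blast
  then have iso: "isoG 2 (Umap E 2 (qrep X)) ?c" using X(2) unfolding qmap_def qclass_def by blast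
  have "{x, y} \<in> ?F" "{x, z} \<in> ?F" using xy xz by auto
  from no_XT_over_path[OF a iso this d(3)] show False .
qed

lemma admissible_path_if_two_edges:
  assumes "\<not> card E \<le> 1"
  shows "\<exists>x y z. admissible V E {x, y, z} \<and> {x, y} \<in> Gedges E \<and> {x, z} \<in> Gedges E \<and>
    x \<noteq> y \<and> x \<noteq> z \<and> y \<noteq> z"
proof -
  have no_loop: "(v, v) \<notin> E" for v using tree_acyclic[OF tree, of v] by auto
  have edge: "{p, q} \<in> Gedges E" if "(p, q) \<in> E" for p q using that unfolding Gedges_def by blast
  show ?thesis
  proof (cases "\<exists>p c. (p, c) \<in> E \<and> p \<noteq> r")
    case True
    then obtain p c where pc: "(p, c) \<in> E" "p \<noteq> r" by blast
    then obtain g where gp: "(g, p) \<in> E"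
      using tree tree_edge_in[OF tree pc(1)] unfolding rooted_tree_def by blast
    have "g \<noteq> c"
    proof
      assume "g = c"
      then have "(p, p) \<in> E\<^sup>+" using gp pc(1) by (meson r_into_trancl trancl_into_trancl)
      then show False using tree_acyclic[OF tree] by blast
    qed
    then show ?thesis
      using admissible_path[OF tree gp pc(1)] edge[OF gp] edge[OF pc(1)] no_loop gp pc(1)
      by (intro exI[of _ p] exI[of _ g] exI[of _ c]) (auto simp: insert_commute)
  next
    case False
    obtain e1 e2 where e: "e1 \<in> E" "e2 \<in> E" "e1 \<noteq> e2"
      using assms card_le_Suc0_iff_eq[OF finite_tree_edges[OF tree]] by auto
    obtain p1 c1 p2 c2 where "e1 = (p1, c1)" "e2 = (p2, c2)" by fastforce
    with e False have rc: "(r, c1) \<in> E" "(r, c2) \<in> E" "c1 \<noteq> c2" by auto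
    then show ?thesis
      using admissible_path[OF tree rc(1,2)] edge[OF rc(1)] edge[OF rc(2)] no_loop
      by (intro exI[of _ r] exI[of _ c1] exI[of _ c2]) auto
  qed
qed

lemma U_culf_labelled_iff: "U_culf_labelled V E \<longleftrightarrow> card V = 1"
proof
  assume U: "U_culf_labelled V E"
  show "card V = 1"
  proof (rule ccontr)
    assume "card V \<noteq> 1"
    then obtain p c where "(p, c) \<in> E" using card_vertices_eq_1_iff by auto
    then show False using not_U_culf_labelled_if_edge U by blast
  qed
next
  assume "card V = 1"
  from U_culf_labelled_one_vertex[OF two_vertex_tree_if_card_1[OF tree this] refl]
  show "U_culf_labelled V E" .
qed

lemma U_culf_unlabelled_iff: "U_culf_unlabelled pl P V E \<longleftrightarrow> card E \<le> 1"
proof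
  assume U: "U_culf_unlabelled pl P V E"
  show "card E \<le> 1"
  proof (rule ccontr)
    assume "\<not> card E \<le> 1"
    then obtain x y z where "admissible V E {x, y, z}" "{x, y} \<in> Gedges E" "{x, z} \<in> Gedges E"
      "x \<noteq> y" "x \<noteq> z" "y \<noteq> z"
      using admissible_path_if_two_edges by blast
    from not_U_culf_unlabelled_if_path[OF this] show False using U by blast
  qed
next
  assume "card E \<le> 1"
  then obtain w where "two_vertex_tree V E r w"
    using two_vertex_tree_if_card_edges_le_1[OF tree] by blast
  from U_culf_unlabelled_two_vertex[OF this] show "U_culf_unlabelled pl P V E" .
qed

end

theorem mainTheorem6:
  fixes V :: "'v set" and r :: 'v and E :: "('v \<times> 'v) set" and P :: "'v \<Rightarrow> 'v \<Rightarrow> bool"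
  assumes "rooted_tree V r E"
  shows "(U_culf_labelled V E \<longleftrightarrow> card V = 1) \<and>
         (U_culf_unlabelled False P V E \<longleftrightarrow> card E \<le> 1) \<and>
         (planar_structure V E P \<longrightarrow> (U_culf_unlabelled True P V E \<longleftrightarrow> card E \<le> 1))"
  using U_culf_labelled_iff[OF assms] U_culf_unlabelled_iff[OF assms] by blast

end
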